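(* Let $d\ge 2$ and let $s$ be a zero-mean complex random variable and ${\bf z}$ a zero-mean complex random vector of dimension $d-1$, with $s$ and ${\bf z}$ mutually independent, both circular (i.e. ${\rm E}[s^2]=0$ and ${\rm E}[{\bf z}{\bf z}^T]={\bf 0}$), with densities $p_s$, $p_{\bf z}$ satisfying the standard regularity conditions (smooth, all expectations below finite, boundary terms in integration by parts vanish). Consider $N$ i.i.d. observations of ${\bf x}={\bf A}{\bf v}$, ${\bf v}=[s;{\bf z}]$, where $$ {\bf A}=\begin{pmatrix}1 & {\bf h}^H\\ {\bf g} & {\bf g}{\bf h}^H-{\bf I}_{d-1}\end{pmatrix},\qquad {\bf A}^{-1}=\begin{pmatrix}{\bf w}^H\\ {\bf B}\end{pmatrix}=\begin{pmatrix}1-{\bf h}^H{\bf g} & {\bf h}^H\\ {\bf g} & -{\bf I}_{d-1}\end{pmatrix}, $$ with unknown parameters ${\bf h},{\bf g}\in\mathbb{C}^{d-1}$, so that the per-sample log-likelihood is $\mathcal{L}({\bf h},{\bf g}|{\bf x})=\log p_s({\bf w}^H{\bf x})+\log p_{\bf z}({\bf B}{\bf x})$. Let the true parameter value satisfy ${\bf h}={\bf 0}$ (with ${\bf g}$ arbitrary) and assume the complex Fisher information matrix of $({\bf h},{\bf g})$ is nonsingular. Then the Cramér–Rao lower bound for ${\bf h}$ (the block of the inverse Fisher information matrix of the $N$ samples corresponding to ${\bf h}$) equals $$ \mathtt{CRLB}({\bf h})=\frac{1}{N}\left(\kappa_s{\bf C}_{\bf z}-\frac{1}{\sigma_s^2}\boldsymbol{\kappa}_{\bf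 z}^{-1}\right)^{-1}, $$ and the Cramér–Rao-induced bound on the interference-to-signal ratio satisfies $$ \frac{1}{\sigma_s^2}\,\mathrm{tr}\bigl({\bf C}_{\bf z}\,\mathtt{CRLB}({\bf h})\bigr)=\frac{1}{N}\sum_{j=2}^{d}\frac{\omega_j}{\sigma_s^2\kappa_s\omega_j-1}, $$ where $\omega_2,\dots,\omega_d$ are the eigenvalues of the positive definite matrix ${\bf C}_{\bf z}^{1/2}\boldsymbol{\kappa}_{\bf z}{\bf C}_{\bf z}^{1/2}$.
   Context: Derivatives are Wirtinger derivatives. Score functions: $\psi_s(s)=-\partial \ln p_s(s,s^* )/\partial s^*$ and $\boldsymbol{\psi}_{\bf z}({\bf z})=-\partial \ln p_{\bf z}({\bf z},{\bf z}^* )/\partial {\bf z}^*$. Notation: $\kappa_s={\rm E}[|\psi_s(s)|^2]$, $\sigma_s^2={\rm E}[|s|^2]$, $\boldsymbol{\kappa}_{\bf z}={\rm E}[\boldsymbol{\psi}_{\bf z}({\bf z})\boldsymbol{\psi}_{\bf z}({\bf z})^H]$, ${\bf C}_{\bf z}={\rm E}[{\bf z}{\bf z}^H]$ (assumed nonsingular), ${\bf C}_{\bf z}^{1/2}$ its Hermitian positive definite square root. For complex parameter vector $\boldsymbol\theta$, the (per-sample) Fisher information matrix is $\mathcal{J}=\begin{pmatrix}{\bf F}&{\bf P}\\{\bf P}^*&{\bf F}^*\end{pmatrix}$ with ${\bf F}={\rm E}[\frac{\partial\mathcal{L}}{\partial\boldsymbol\theta^*}(\frac{\partial\mathcal{L}}{\partial\boldsymbol\theta^*})^H]$,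 ${\bf P}={\rm E}[\frac{\partial\mathcal{L}}{\partial\boldsymbol\theta^*}(\frac{\partial\mathcal{L}}{\partial\boldsymbol\theta^*})^T]$; for $N$ i.i.d. samples it is $N\mathcal{J}$, and the CRLB is its inverse. *)

theory Defs
  imports "HOL-Analysis.Analysis" "HOL-Computational_Algebra.Polynomial"
begin

text \<open>Conjugate Wirtinger derivative d f / d s* = (df/dx + i df/dy)/2 of a
  function of one complex variable (complex-valued; real functions via of_real).\<close>
definition cwirt :: "(complex \<Rightarrow> complex) \<Rightarrow> complex \<Rightarrow> complex" where
  "cwirt f s = (frechet_derivative f (at s) 1 + \<i> * frechet_derivative f (at s) \<i>) / 2"

definition vwirt :: "(complex^'m \<Rightarrow> complex) \<Rightarrow> complex^'m \<Rightarrow> complex^'m" where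
  "vwirt f t = (\<chi> k. (frechet_derivative f (at t) (axis k 1)
                     + \<i> * frechet_derivative f (at t) (axis k \<i>)) / 2)"

definition score_s :: "(complex \<Rightarrow> real) \<Rightarrow> complex \<Rightarrow> complex" where
  "score_s p s = - cwirt (\<lambda>t. complex_of_real (ln (p t))) s"

definition score_z :: "(complex^'m \<Rightarrow> real) \<Rightarrow> complex^'m \<Rightarrow> complex^'m" where
  "score_z p z = - vwirt (\<lambda>t. complex_of_real (ln (p t))) z"

definition kappa_s :: "(complex \<Rightarrow> real) \<Rightarrow> real" where
  "kappa_s p = integral\<^sup>L lborel (\<lambda>s. p s * (cmod (score_s p s))\<^sup>2)"

definition sigma2_s :: "(complex \<Rightarrow> real) \<Rightarrow> real" where
  "sigma2_s p = integral\<^sup>L lborel (\<lambda>s. p s * (cmod s)\<^sup>2)"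

definition kappa_z :: "(complex^'m \<Rightarrow> real) \<Rightarrow> complex^'m^'m" where
  "kappa_z p = (\<chi> i j. integral\<^sup>L lborel
      (\<lambda>z. complex_of_real (p z) * (score_z p z $ i * cnj (score_z p z $ j))))"

definition cov_z :: "(complex^'m \<Rightarrow> real) \<Rightarrow> complex^'m^'m" where
  "cov_z p = (\<chi> i j. integral\<^sup>L lborel (\<lambda>z. complex_of_real (p z) * (z $ i * cnj (z $ j))))"

definition cnj_transpose :: "complex^'n^'m \<Rightarrow> complex^'m^'n" where
  "cnj_transpose M = (\<chi> i j. cnj (M $ j $ i))"

definition hermitian :: "complex^'n^'n \<Rightarrow> bool" where
  "hermitian M \<longleftrightarrow> cnj_transpose M = M"

definition posdef :: "complex^'n^'n \<Rightarrow> bool" where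
  "posdef M \<longleftrightarrow> hermitian M \<and>
     (\<forall>x. x \<noteq> 0 \<longrightarrow> Re (\<Sum>i\<in>UNIV. \<Sum>j\<in>UNIV. cnj (x $ i) * M $ i $ j * x $ j) > 0)"

definition hpd_sqrt :: "complex^'n^'n \<Rightarrow> complex^'n^'n" where
  "hpd_sqrt C = (THE R. posdef R \<and> R ** R = C)"

definition char_poly_vec :: "complex^'n^'n \<Rightarrow> complex poly" where
  "char_poly_vec M = det (\<chi> i j. (if i = j then [:0, 1:] else 0) - [:M $ i $ j:])"

definition eigenvalue_family :: "complex^'n^'n \<Rightarrow> ('n \<Rightarrow> complex) \<Rightarrow> bool" where
  "eigenvalue_family M om \<longleftrightarrow> char_poly_vec M = (\<Prod>j\<in>UNIV. [:- om j, 1:])"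

definition hH :: "complex^'m \<Rightarrow> complex^'m \<Rightarrow> complex" where
  "hH h y = (\<Sum>i\<in>UNIV. cnj (h $ i) * y $ i)"

text \<open>x = A v with v = [s; z], A = [[1, h^H],[g, g h^H - I]]; x = [x1; x2].\<close>
definition mixA :: "complex^'m \<Rightarrow> complex^'m \<Rightarrow> complex \<times> (complex^'m) \<Rightarrow> complex \<times> (complex^'m)" where
  "mixA h g v = (case v of (s, z) \<Rightarrow>
      (s + hH h z, s *s g + (hH h z) *s g - z))"

definition wHx :: "complex^'m \<Rightarrow> complex^'m \<Rightarrow> complex \<times> (complex^'m) \<Rightarrow> complex" where
  "wHx h g x = (case x of (x1, x2) \<Rightarrow> (1 - hH h g) * x1 + hH h x2)"

definition Bx :: "complex^'m \<Rightarrow> complex \<times> (complex^'m) \<Rightarrow> complex^'m" where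
  "Bx g x = (case x of (x1, x2) \<Rightarrow> x1 *s g - x2)"

definition loglik :: "(complex \<Rightarrow> real) \<Rightarrow> (complex^'m \<Rightarrow> real) \<Rightarrow> complex^'m \<Rightarrow> complex^'m
     \<Rightarrow> complex \<times> (complex^'m) \<Rightarrow> real" where
  "loglik ps pz h g x = ln (ps (wHx h g x)) + ln (pz (Bx g x))"

definition hpart :: "complex^('m + 'm) \<Rightarrow> complex^'m" where
  "hpart t = (\<chi> i. t $ Inl i)"

definition gpart :: "complex^('m + 'm) \<Rightarrow> complex^'m" where
  "gpart t = (\<chi> i. t $ Inr i)"

definition param :: "complex^'m \<Rightarrow> complex^'m \<Rightarrow> complex^('m + 'm)" where
  "param h g = (\<chi> k. case k of Inl i \<Rightarrow> h $ i | Inr i \<Rightarrow> g $ i)"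

definition score_theta :: "(complex \<Rightarrow> real) \<Rightarrow> (complex^'m \<Rightarrow> real) \<Rightarrow> complex^('m + 'm)
     \<Rightarrow> complex \<times> (complex^'m) \<Rightarrow> complex^('m + 'm)" where
  "score_theta ps pz t0 x =
     vwirt (\<lambda>t. complex_of_real (loglik ps pz (hpart t) (gpart t) x)) t0"

definition Ev :: "(complex \<Rightarrow> real) \<Rightarrow> (complex^'m \<Rightarrow> real)
     \<Rightarrow> (complex \<times> (complex^'m) \<Rightarrow> complex) \<Rightarrow> complex" where
  "Ev ps pz f = integral\<^sup>L (lborel \<Otimes>\<^sub>M lborel)
      (\<lambda>v. complex_of_real (ps (fst v) * pz (snd v)) * f v)"

definition fisherF :: "(complex \<Rightarrow> real) \<Rightarrow> (complex^'m \<Rightarrow> real) \<Rightarrow> complex^('m + 'm)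
     \<Rightarrow> complex^('m + 'm)^('m + 'm)" where
  "fisherF ps pz t0 = (\<chi> i j. Ev ps pz (\<lambda>v.
      let u = score_theta ps pz t0 (mixA (hpart t0) (gpart t0) v) in u $ i * cnj (u $ j)))"

definition fisherP :: "(complex \<Rightarrow> real) \<Rightarrow> (complex^'m \<Rightarrow> real) \<Rightarrow> complex^('m + 'm)
     \<Rightarrow> complex^('m + 'm)^('m + 'm)" where
  "fisherP ps pz t0 = (\<chi> i j. Ev ps pz (\<lambda>v.
      let u = score_theta ps pz t0 (mixA (hpart t0) (gpart t0) v) in u $ i * u $ j))"

text \<open>Augmented Fisher information matrix [[F, P], [P*, F*]].\<close>
definition fisherJ :: "(complex \<Rightarrow> real) \<Rightarrow> (complex^'m \<Rightarrow> real) \<Rightarrow> complex^('m + 'm)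
     \<Rightarrow> complex^(('m + 'm) + ('m + 'm))^(('m + 'm) + ('m + 'm))" where
  "fisherJ ps pz t0 = (let F = fisherF ps pz t0; P = fisherP ps pz t0 in
     (\<chi> a b. case (a, b) of
        (Inl i, Inl j) \<Rightarrow> F $ i $ j
      | (Inl i, Inr j) \<Rightarrow> P $ i $ j
      | (Inr i, Inl j) \<Rightarrow> cnj (P $ i $ j)
      | (Inr i, Inr j) \<Rightarrow> cnj (F $ i $ j)))"

definition crlb_h :: "nat \<Rightarrow> (complex \<Rightarrow> real) \<Rightarrow> (complex^'m \<Rightarrow> real) \<Rightarrow> complex^('m + 'm)
     \<Rightarrow> complex^'m^'m" where
  "crlb_h N ps pz t0 = (let Jinv = matrix_inv (real N *\<^sub>R fisherJ ps pz t0) in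
     (\<chi> i j. Jinv $ Inl (Inl i) $ Inl (Inl j)))"

end

theory Submission
  imports Defs
begin

text \<open>At h = 0 the score of the model splits into the products conj (psi_s s) z and
  - conj s psi_z z of functions of the two independent sources, so every entry of the Fisher
  information factorises into a source moment times a noise moment. Integration by parts gives
  E[psi_s conj s] = 1 and E[psi_z z^H] = I, and circularity makes the block P vanish. The h-block of the inverse is then the inverse of the Schur complement
  kappa_s C_z - kappa_z^-1 / sigma_s^2. Finally, with R the Hermitian square root of C_z, the
  matrix C_z kappa_z = R (R kappa_z R) R^-1 has the eigenvalues omega_j, and the trace of
  C_z times the Schur inverse is a trace of a resolvent of C_z kappa_z, which is the logarithmic
  derivative of its characteristic polynomial.\<close>

section \<open>Matrix algebra\<close>

lemma matrix_inv_right: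
  fixes A :: "'a::semiring_1^'n^'m"
  assumes "invertible A"
  shows "A ** matrix_inv A = mat 1"
  using someI_ex[of "\<lambda>A'. A ** A' = mat 1 \<and> A' ** A = mat 1"] assms
  by (auto simp: invertible_def matrix_inv_def)

lemma matrix_inv_left:
  fixes A :: "'a::semiring_1^'n^'m"
  assumes "invertible A"
  shows "matrix_inv A ** A = mat 1"
  using someI_ex[of "\<lambda>A'. A ** A' = mat 1 \<and> A' ** A = mat 1"] assms
  by (auto simp: invertible_def matrix_inv_def)

lemma matrix_inv_eqI:
  fixes A B :: "'a::field^'n^'n"
  assumes "A ** B = mat 1"
  shows "matrix_inv A = B"
proof -
  have "invertible A" using assms invertible_right_inverse by blast
  have "matrix_inv A = matrix_inv A ** (A ** B)"
    by (simp add: assms)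
  also have "\<dots> = B"
    by (simp add: matrix_mul_assoc matrix_inv_left[OF \<open>invertible A\<close>])
  finally show ?thesis .
qed

lemma matrix_inv_scaleR:
  fixes A :: "'a::real_field^'n^'n"
  assumes "k \<noteq> 0" and "invertible A"
  shows "matrix_inv (k *\<^sub>R A) = (1 / k) *\<^sub>R matrix_inv A"
  using assms by (intro matrix_inv_eqI)
    (simp add: matrix_scalar_ac scalar_matrix_assoc[symmetric] matrix_inv_right)

lemma matrix_diff_ldistrib: "(A::'a::ring_1^'n^'m) ** (B - C) = A ** B - A ** C"
  by (simp add: matrix_matrix_mult_def vec_eq_iff algebra_simps sum_subtractf)

lemma matrix_diff_rdistrib: "((A::'a::ring_1^'n^'m) - B) ** C = A ** C - B ** C"
  by (simp add: matrix_matrix_mult_def vec_eq_iff algebra_simps sum_subtractf)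

lemma matrix_neg_left: "(- (A::'a::ring_1^'n^'m)) ** B = - (A ** B)"
  by (simp add: matrix_matrix_mult_def vec_eq_iff sum_negf)

lemma matrix_neg_right: "(A::'a::ring_1^'n^'m) ** (- B) = - (A ** B)"
  by (simp add: matrix_matrix_mult_def vec_eq_iff sum_negf)

lemma mat_mult_left: "mat c ** (A :: 'a::semiring_1^'n^'m) = (\<chi> i j. c * A $ i $ j)"
  unfolding matrix_matrix_mult_def mat_def
  by (auto simp: vec_eq_iff if_distrib if_distribR sum.delta'[OF finite] cong: if_cong)

lemma mat_mult_right: "(A :: 'a::semiring_1^'n^'m) ** mat c = (\<chi> i j. A $ i $ j * c)"
  unfolding matrix_matrix_mult_def mat_def
  by (auto simp: vec_eq_iff if_distrib if_distribR sum.delta'[OF finite] cong: if_cong)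

lemma mat_mult_commute: "mat c ** (A :: 'a::comm_semiring_1^'n^'n) = A ** mat c"
  unfolding mat_mult_left mat_mult_right by (simp add: mult.commute)

lemma trace_mat_mult: "trace (mat c ** (A :: 'a::comm_semiring_1^'n^'n)) = c * trace A"
  unfolding mat_mult_left trace_def by (simp add: sum_distrib_left)

lemma trace_scaleR: "trace (k *\<^sub>R (A :: 'a::real_algebra_1^'n^'n)) = k *\<^sub>R trace A"
  unfolding trace_def by (simp add: scaleR_sum_right)

lemma trace_uminus: "trace (- (A :: 'a::ring_1^'n^'n)) = - trace A"
  unfolding trace_def by (simp add: sum_negf)

lemma matrix_vector_mult_scale: "(A::'a::comm_ring_1^'n^'m) *v (c *s x) = c *s (A *v x)"
  by (simp add: matrix_vector_mult_def vec_eq_iff sum_distrib_left mult_ac)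

lemma matrix_vector_mult_sum: "(A::'a::comm_ring_1^'n^'m) *v (\<Sum>v\<in>S. f v) = (\<Sum>v\<in>S. A *v f v)"
  by (induction S rule: infinite_finite_induct) (auto simp: matrix_vector_right_distrib)

lemma vector_scalar_mult_of_real: "complex_of_real r *s (x::complex^'n) = r *\<^sub>R x"
  by (simp add: vec_eq_iff scaleR_conv_of_real[where 'a = complex])

lemma norm_vec_nth_mult_le: "norm (x $ i) * norm (x $ j) \<le> (norm (x :: complex^'n))\<^sup>2"
  unfolding power2_eq_square by (intro mult_mono Finite_Cartesian_Product.norm_nth_le) auto

lemma sum_UNIV_Plus:
  "(\<Sum>x\<in>(UNIV::('a::finite + 'b::finite) set). f x) = (\<Sum>i\<in>UNIV. f (Inl i)) + (\<Sum>j\<in>UNIV. f (Inr j))"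
  by (subst UNIV_Plus_UNIV[symmetric], subst sum.Plus) (simp_all add: o_def)

definition block_matrix ::
    "'a^'m^'m \<Rightarrow> 'a^'n^'m \<Rightarrow> 'a^'m^'n \<Rightarrow> 'a^'n^'n \<Rightarrow> 'a^('m + 'n)^('m + 'n)" where
  "block_matrix A B C D = (\<chi> r c. case (r, c) of
      (Inl i, Inl j) \<Rightarrow> A $ i $ j | (Inl i, Inr j) \<Rightarrow> B $ i $ j
    | (Inr i, Inl j) \<Rightarrow> C $ i $ j | (Inr i, Inr j) \<Rightarrow> D $ i $ j)"

definition upper_left_block :: "'a^('m::finite + 'n::finite)^('m + 'n) \<Rightarrow> 'a^'m^'m" where
  "upper_left_block M = (\<chi> i j. M $ Inl i $ Inl j)"

lemma upper_left_block_scaleR [simp]: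
  "upper_left_block (k *\<^sub>R M) = k *\<^sub>R upper_left_block M"
  by (simp add: upper_left_block_def vec_eq_iff)

lemma upper_left_block_mult:
  fixes J M :: "'a::semiring_1^('m::finite + 'n::finite)^('m + 'n)"
  assumes "\<And>i j. J $ Inl i $ Inr j = 0"
  shows "upper_left_block (J ** M) = upper_left_block J ** upper_left_block M"
  using assms
  by (simp add: upper_left_block_def matrix_matrix_mult_def sum_UNIV_Plus vec_eq_iff)

lemma upper_left_block_inverse:
  fixes J :: "'a::field^('m::finite + 'n::finite)^('m + 'n)"
  assumes "invertible J" and "\<And>i j. J $ Inl i $ Inr j = 0"
  shows "invertible (upper_left_block J)"
    and "upper_left_block (matrix_inv J) = matrix_inv (upper_left_block J)"
proof -
  have right_inverse: "upper_left_block J ** upper_left_block (matrix_inv J) = mat 1"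
    using upper_left_block_mult[OF assms(2), of "matrix_inv J"] matrix_inv_right[OF assms(1)]
    by (simp add: upper_left_block_def mat_def vec_eq_iff)
  then show "invertible (upper_left_block J)"
    using invertible_right_inverse by blast
  show "upper_left_block (matrix_inv J) = matrix_inv (upper_left_block J)"
    using matrix_inv_eqI[OF right_inverse] by simp
qed

lemma schur_complement_inverse:
  fixes A :: "'a::field^'m::finite^'m" and B :: "'a^'n::finite^'m"
    and C :: "'a^'m^'n" and D :: "'a^'n^'n"
  assumes "invertible (block_matrix A B C D)" and "invertible D"
  shows "invertible (A - B ** matrix_inv D ** C)"
    and "upper_left_block (matrix_inv (block_matrix A B C D)) = matrix_inv (A - B ** matrix_inv D ** C)"
proof -
  define M where "M = matrix_inv (block_matrix A B C D)"
  define X where "X = upper_left_block M"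
  define Y :: "'a^'m^'n" where "Y = (\<chi> i j. M $ Inr i $ Inl j)"
  have BM: "block_matrix A B C D ** M = mat 1"
    unfolding M_def by (rule matrix_inv_right[OF assms(1)])
  have "(block_matrix A B C D ** M) $ Inl i $ Inl j = (A ** X + B ** Y) $ i $ j"
    and "(block_matrix A B C D ** M) $ Inr i' $ Inl j = (C ** X + D ** Y) $ i' $ j" for i i' j
    by (simp_all add: matrix_matrix_mult_def block_matrix_def X_def Y_def upper_left_block_def
        sum_UNIV_Plus)
  with BM have top: "A ** X + B ** Y = mat 1" and bottom: "C ** X + D ** Y = 0"
    by (auto simp: vec_eq_iff mat_def)
  have "Y = - (matrix_inv D ** C ** X)"
  proof -
    have "matrix_inv D ** (C ** X + D ** Y) = 0" by (simp add: bottom)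
    then show ?thesis
      by (simp add: matrix_add_ldistrib matrix_mul_assoc matrix_inv_left[OF assms(2)] eq_neg_iff_add_eq_0 add.commute)
  qed
  with top have right_inverse: "(A - B ** matrix_inv D ** C) ** X = mat 1"
    by (simp add: matrix_diff_rdistrib matrix_neg_right matrix_mul_assoc)
  then show "invertible (A - B ** matrix_inv D ** C)"
    using invertible_right_inverse by blast
  show "upper_left_block (matrix_inv (block_matrix A B C D)) = matrix_inv (A - B ** matrix_inv D ** C)"
    using matrix_inv_eqI[OF right_inverse] by (simp add: X_def M_def)
qed

lemma poly_det: "poly (det P) c = det (\<chi> i j. poly (P $ i $ j) c)"
  unfolding det_def by (simp add: poly_sum poly_prod)

lemma pderiv_sum: "pderiv (\<Sum>k\<in>A. f k) = (\<Sum>k\<in>A. pderiv (f k))"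
  by (induction A rule: infinite_finite_induct) (auto simp: pderiv_add)

lemma pderiv_det:
  fixes P :: "'a::idom poly^'n^'n"
  shows "pderiv (det P) = (\<Sum>k\<in>UNIV. det (\<chi> i. if i = k then (\<chi> j. pderiv (P $ i $ j)) else P $ i))"
proof -
  have "pderiv (det P) = (\<Sum>p\<in>{p. p permutes UNIV}. of_int (sign p) *
          (\<Sum>k\<in>UNIV. (\<Prod>i\<in>UNIV - {k}. P $ i $ p i) * pderiv (P $ k $ p k)))"
    unfolding det_def pderiv_sum by (simp add: pderiv_smult pderiv_prod of_int_poly)
  also have "\<dots> = (\<Sum>k\<in>UNIV. \<Sum>p\<in>{p. p permutes UNIV}. of_int (sign p) *
          ((\<Prod>i\<in>UNIV - {k}. P $ i $ p i) * pderiv (P $ k $ p k)))"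
    by (simp add: sum_distrib_left sum.swap[of _ UNIV])
  also have "\<dots> = (\<Sum>k\<in>UNIV. det (\<chi> i. if i = k then (\<chi> j. pderiv (P $ i $ j)) else P $ i))"
    unfolding det_def
  proof (intro sum.cong refl)
    fix k p
    have "(\<Prod>i\<in>UNIV. (\<chi> i. if i = k then (\<chi> j. pderiv (P $ i $ j)) else P $ i) $ i $ p i)
        = pderiv (P $ k $ p k) * (\<Prod>i\<in>UNIV - {k}. P $ i $ p i)"
      by (subst prod.remove[of _ k]) (auto intro!: prod.cong)
    then show "of_int (sign p) * ((\<Prod>i\<in>UNIV - {k}. P $ i $ p i) * pderiv (P $ k $ p k)) =
        of_int (sign p) * (\<Prod>i\<in>UNIV. (\<chi> i. if i = k then (\<chi> j. pderiv (P $ i $ j)) else P $ i) $ i $ p i)"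
      by (simp add: mult.commute)
  qed
  finally show ?thesis .
qed

lemma char_poly_vec_eval: "poly (char_poly_vec T) c = det (mat c - T)"
  unfolding char_poly_vec_def poly_det
  by (rule arg_cong[where f = det]) (simp add: vec_eq_iff mat_def)

lemma char_poly_vec_eqI:
  fixes S T :: "complex^'n^'n"
  assumes "\<And>c. det (mat c - S) = det (mat c - T)"
  shows "char_poly_vec S = char_poly_vec T"
  using assms by (simp add: poly_eq_poly_eq_iff[symmetric] fun_eq_iff char_poly_vec_eval)

lemma char_poly_vec_similar:
  fixes P M :: "complex^'n^'n"
  assumes "invertible P"
  shows "char_poly_vec (P ** M ** matrix_inv P) = char_poly_vec M"
proof (rule char_poly_vec_eqI)
  fix c :: complex
  have "P ** mat c ** matrix_inv P = mat c"
    by (simp add: mat_mult_commute flip: matrix_mul_assoc)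
       (simp add: matrix_mul_assoc matrix_inv_right[OF assms])
  then have "mat c - P ** M ** matrix_inv P = P ** (mat c - M) ** matrix_inv P"
    by (simp add: matrix_diff_ldistrib matrix_diff_rdistrib)
  moreover have "det P * det (matrix_inv P) = 1"
    using matrix_inv_right[OF assms] by (simp flip: det_mul)
  ultimately show "det (mat c - P ** M ** matrix_inv P) = det (mat c - M)"
    by (simp add: det_mul ac_simps)
qed

lemma char_poly_vec_mult_sqrt:
  fixes C K R :: "complex^'n^'n"
  assumes "R ** R = C" and "invertible R"
  shows "char_poly_vec (C ** K) = char_poly_vec (R ** K ** R)"
proof -
  have "C ** K = R ** (R ** K ** R) ** matrix_inv R"
    using matrix_inv_right[OF assms(2)] by (simp add: assms(1)[symmetric] flip: matrix_mul_assoc)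
  then show ?thesis
    using char_poly_vec_similar[OF assms(2)] by simp
qed

lemma det_row_axis_eq_cofactor:
  fixes A :: "'a::field^'n^'n"
  assumes "invertible A"
  shows "det (\<chi> i. if i = k then axis k 1 else row i A) = det A * matrix_inv A $ k $ k"
proof -
  define x where "x = row k (matrix_inv A)"
  have combination: "(\<Sum>i\<in>UNIV. x $ i *s row i A) = axis k 1"
  proof -
    have "(\<Sum>i\<in>UNIV. x $ i *s row i A) $ j = (matrix_inv A ** A) $ k $ j" for j
      unfolding x_def by (simp add: matrix_matrix_mult_def row_def sum_component)
    then show ?thesis
      using matrix_inv_left[OF assms] by (simp add: vec_eq_iff mat_def axis_def)
  qed
  then have "det (\<chi> i. if i = k then axis k 1 else row i A) = x $ k * det A"
    using cramer_lemma_transpose[of k x A] unfolding combination by simp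
  then show ?thesis
    unfolding x_def by (simp add: row_def mult.commute)
qed

lemma char_poly_vec_pderiv_eval:
  fixes T :: "complex^'n^'n"
  assumes "invertible (mat c - T)"
  shows "poly (pderiv (char_poly_vec T)) c = det (mat c - T) * trace (matrix_inv (mat c - T))"
proof -
  let ?P = "(\<chi> i j. (if i = j then [:0, 1:] else 0) - [:T $ i $ j:]) :: complex poly^'n^'n"
  have "poly (pderiv (char_poly_vec T)) c =
      (\<Sum>k\<in>UNIV. poly (det (\<chi> i. if i = k then (\<chi> j. pderiv (?P $ i $ j)) else ?P $ i)) c)"
    unfolding char_poly_vec_def pderiv_det poly_sum ..
  also have "\<dots> = (\<Sum>k\<in>UNIV. det (\<chi> i. if i = k then axis k 1 else row i (mat c - T)))"
    unfolding poly_det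
    by (intro sum.cong refl arg_cong[where f = det])
       (auto simp: vec_eq_iff mat_def axis_def row_def pderiv_diff pderiv_pCons)
  also have "\<dots> = det (mat c - T) * trace (matrix_inv (mat c - T))"
    unfolding det_row_axis_eq_cofactor[OF assms] trace_def sum_distrib_left ..
  finally show ?thesis .
qed

lemma poly_pderiv_prod_linear:
  fixes \<omega> :: "'n::finite \<Rightarrow> 'a::field"
  assumes "\<And>j. c \<noteq> \<omega> j"
  shows "poly (pderiv (\<Prod>j\<in>UNIV. [:- \<omega> j, 1:])) c =
     (\<Prod>j\<in>UNIV. c - \<omega> j) * (\<Sum>j\<in>UNIV. 1 / (c - \<omega> j))"
proof -
  have "poly (pderiv (\<Prod>j\<in>UNIV. [:- \<omega> j, 1:])) c = (\<Sum>a\<in>UNIV. \<Prod>j\<in>UNIV - {a}. c - \<omega> j)"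
    by (simp add: pderiv_prod poly_sum poly_prod pderiv_pCons)
  also have "\<dots> = (\<Sum>a\<in>UNIV. (\<Prod>j\<in>UNIV. c - \<omega> j) * (1 / (c - \<omega> a)))"
  proof (intro sum.cong refl)
    fix a
    have "(\<Prod>j\<in>UNIV. c - \<omega> j) = (c - \<omega> a) * (\<Prod>j\<in>UNIV - {a}. c - \<omega> j)"
      by (rule prod.remove) auto
    then show "(\<Prod>j\<in>UNIV - {a}. c - \<omega> j) = (\<Prod>j\<in>UNIV. c - \<omega> j) * (1 / (c - \<omega> a))"
      using assms[of a] by (simp add: field_simps)
  qed
  finally show ?thesis
    by (simp add: sum_distrib_left)
qed

lemma det_mat_minus_eq_prod:
  fixes T :: "complex^'n^'n" and \<omega> :: "'n \<Rightarrow> complex"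
  assumes "char_poly_vec T = (\<Prod>j\<in>UNIV. [:- \<omega> j, 1:])"
  shows "det (mat c - T) = (\<Prod>j\<in>UNIV. c - \<omega> j)"
  using char_poly_vec_eval[of T c] assms by (simp add: poly_prod)

lemma char_poly_root_neq_if_invertible:
  fixes T :: "complex^'n^'n" and \<omega> :: "'n \<Rightarrow> complex"
  assumes "char_poly_vec T = (\<Prod>j\<in>UNIV. [:- \<omega> j, 1:])" and "invertible (mat c - T)"
  shows "c \<noteq> \<omega> j"
proof
  assume "c = \<omega> j"
  then have "(\<Prod>j\<in>UNIV. c - \<omega> j) = 0"
    by (intro prod_zero) auto
  with assms show False
    by (simp add: invertible_det_nz det_mat_minus_eq_prod)
qed

lemma trace_resolvent:
  fixes T :: "complex^'n^'n" and \<omega> :: "'n \<Rightarrow> complex"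
  assumes char_poly: "char_poly_vec T = (\<Prod>j\<in>UNIV. [:- \<omega> j, 1:])"
    and inv: "invertible (mat c - T)"
  shows "trace (matrix_inv (mat c - T)) = (\<Sum>j\<in>UNIV. 1 / (c - \<omega> j))"
proof -
  have "det (mat c - T) * trace (matrix_inv (mat c - T)) = det (mat c - T) * (\<Sum>j\<in>UNIV. 1 / (c - \<omega> j))"
    using char_poly_vec_pderiv_eval[OF inv] char_poly_root_neq_if_invertible[OF assms]
      poly_pderiv_prod_linear
    by (metis char_poly det_mat_minus_eq_prod[OF char_poly])
  moreover have "det (mat c - T) \<noteq> 0"
    using inv invertible_det_nz by blast
  ultimately show ?thesis
    by simp
qed

lemma trace_mult_inv_scaled_minus_id:
  fixes T :: "complex^'n^'n" and \<omega> :: "'n \<Rightarrow> complex"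
  assumes char_poly: "char_poly_vec T = (\<Prod>j\<in>UNIV. [:- \<omega> j, 1:])"
    and "a \<noteq> 0" and "invertible (a *\<^sub>R T - mat 1)"
  shows "trace (T ** matrix_inv (a *\<^sub>R T - mat 1)) = (\<Sum>j\<in>UNIV. \<omega> j / (of_real a * \<omega> j - 1))"
proof -
  define c where "c = complex_of_real (1 / a)"
  have scaled: "a *\<^sub>R T - mat 1 = (- a) *\<^sub>R (mat c - T)"
    using \<open>a \<noteq> 0\<close> by (simp add: c_def vec_eq_iff mat_def scaleR_conv_of_real[where 'a = complex] field_simps)
  then have inv: "invertible (mat c - T)"
    using assms(2,3) scalar_invertible[of "- 1 / a" "a *\<^sub>R T - mat 1"] by simp
  define W where "W = matrix_inv (mat c - T)"
  have "T ** W = mat c ** W - (mat c - T) ** W"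
    by (simp add: matrix_diff_rdistrib)
  then have "T ** W = mat c ** W - mat 1"
    using matrix_inv_right[OF inv] by (simp add: W_def)
  moreover have "matrix_inv (a *\<^sub>R T - mat 1) = (1 / - a) *\<^sub>R W"
    unfolding scaled W_def using \<open>a \<noteq> 0\<close> inv by (intro matrix_inv_scaleR) auto
  ultimately have "trace (T ** matrix_inv (a *\<^sub>R T - mat 1)) = of_real (- 1 / a) * (c * trace W - of_nat CARD('n))"
    by (simp add: matrix_neg_right trace_uminus matrix_scalar_ac trace_scaleR trace_sub trace_mat_mult trace_I
        scaleR_conv_of_real[where 'a = complex] flip: scalar_matrix_assoc)
  also have "\<dots> = (\<Sum>j\<in>UNIV. of_real (- 1 / a) * (c / (c - \<omega> j) - 1))"
    by (simp add: W_def trace_resolvent[OF char_poly inv] sum_distrib_left sum_subtractf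
        right_diff_distrib sum_negf)
  also have "\<dots> = (\<Sum>j\<in>UNIV. \<omega> j / (of_real a * \<omega> j - 1))"
  proof (intro sum.cong refl)
    fix j
    have "c \<noteq> \<omega> j"
      by (rule char_poly_root_neq_if_invertible[OF char_poly inv])
    with \<open>a \<noteq> 0\<close> show "of_real (- 1 / a) * (c / (c - \<omega> j) - 1) = \<omega> j / (of_real a * \<omega> j - 1)"
      by (auto simp: c_def field_simps)
  qed
  finally show ?thesis .
qed

lemma trace_mult_inv_schur_complement:
  fixes C K R :: "complex^'n^'n" and \<omega> :: "'n \<Rightarrow> complex" and s2 ks :: real
  assumes sqrt: "R ** R = C" and "invertible R" and "invertible K" and "s2 \<noteq> 0" and "ks \<noteq> 0"
    and inv: "invertible (ks *\<^sub>R C - (1 / s2) *\<^sub>R matrix_inv K)"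
    and char_poly: "char_poly_vec (R ** K ** R) = (\<Prod>j\<in>UNIV. [:- \<omega> j, 1:])"
  shows "trace (C ** matrix_inv (ks *\<^sub>R C - (1 / s2) *\<^sub>R matrix_inv K))
    = of_real s2 * (\<Sum>j\<in>UNIV. \<omega> j / (of_real (s2 * ks) * \<omega> j - 1))"
proof -
  define S where "S = ks *\<^sub>R C - (1 / s2) *\<^sub>R matrix_inv K"
  define T where "T = C ** K"
  define a where "a = s2 * ks"
  have K_inv: "K ** matrix_inv K = mat 1" "matrix_inv K ** K = mat 1"
    using \<open>invertible K\<close> by (simp_all add: matrix_inv_right matrix_inv_left)
  have "(a *\<^sub>R T - mat 1) ** matrix_inv K = a *\<^sub>R C - matrix_inv K"
    by (simp add: T_def matrix_diff_rdistrib scalar_matrix_assoc[symmetric] K_inv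
        flip: matrix_mul_assoc)
  then have S_eq: "S = (1 / s2) *\<^sub>R ((a *\<^sub>R T - mat 1) ** matrix_inv K)"
    using \<open>s2 \<noteq> 0\<close> by (simp add: S_def a_def scaleR_diff_right)
  then have "a *\<^sub>R T - mat 1 = s2 *\<^sub>R (S ** K)"
    using \<open>s2 \<noteq> 0\<close> by (simp add: scalar_matrix_assoc[symmetric] K_inv flip: matrix_mul_assoc)
  then have inv_affine: "invertible (a *\<^sub>R T - mat 1)"
    using inv \<open>invertible K\<close> \<open>s2 \<noteq> 0\<close> by (simp add: S_def scalar_invertible invertible_mult)
  have "S ** (s2 *\<^sub>R (K ** matrix_inv (a *\<^sub>R T - mat 1))) = (a *\<^sub>R T - mat 1) ** matrix_inv (a *\<^sub>R T - mat 1)"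
    using \<open>s2 \<noteq> 0\<close>
    by (simp add: S_eq matrix_scalar_ac scalar_matrix_assoc[symmetric] matrix_mul_assoc)
       (simp add: K_inv flip: matrix_mul_assoc)
  then have "matrix_inv S = s2 *\<^sub>R (K ** matrix_inv (a *\<^sub>R T - mat 1))"
    using matrix_inv_right[OF inv_affine] by (intro matrix_inv_eqI) simp
  then have "C ** matrix_inv S = s2 *\<^sub>R (C ** K ** matrix_inv (a *\<^sub>R T - mat 1))"
    by (simp only: matrix_scalar_ac scalar_matrix_assoc[symmetric] matrix_mul_assoc)
  then have "C ** matrix_inv S = s2 *\<^sub>R (T ** matrix_inv (a *\<^sub>R T - mat 1))"
    by (simp only: T_def)
  moreover have "char_poly_vec T = (\<Prod>j\<in>UNIV. [:- \<omega> j, 1:])"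
    using char_poly_vec_mult_sqrt[OF sqrt \<open>invertible R\<close>] char_poly by (simp add: T_def)
  ultimately show ?thesis
    unfolding S_def[symmetric]
    using trace_mult_inv_scaled_minus_id[OF _ _ inv_affine] \<open>s2 \<noteq> 0\<close> \<open>ks \<noteq> 0\<close>
    by (simp add: a_def trace_scaleR scaleR_conv_of_real[where 'a = complex])
qed

section \<open>Hermitian matrices\<close>

definition cinner :: "complex^'n \<Rightarrow> complex^'n \<Rightarrow> complex" where
  "cinner x y = (\<Sum>i\<in>UNIV. cnj (x $ i) * y $ i)"

lemma cinner_add_left: "cinner (x + y) z = cinner x z + cinner y z"
  and cinner_add_right: "cinner x (y + z) = cinner x y + cinner x z"
  and cinner_diff_right: "cinner x (y - z) = cinner x y - cinner x z"
  and cinner_scale_left: "cinner (c *s x) y = cnj c * cinner x y"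
  and cinner_scale_right: "cinner x (c *s y) = c * cinner x y"
  and cinner_zero_left [simp]: "cinner 0 y = 0"
  and cinner_zero_right [simp]: "cinner x 0 = 0"
  by (simp_all add: cinner_def algebra_simps sum.distrib sum_subtractf sum_distrib_left)

lemma cinner_sum_right: "cinner x (\<Sum>v\<in>S. f v) = (\<Sum>v\<in>S. cinner x (f v))"
  by (induction S rule: infinite_finite_induct) (auto simp: cinner_add_right)

lemma cnj_cinner: "cnj (cinner x y) = cinner y x"
  unfolding cinner_def by (simp add: mult.commute)

lemma cinner_self: "cinner x x = of_real ((norm x)\<^sup>2)"
proof -
  have "cinner x x = of_real (\<Sum>i\<in>UNIV. (norm (x $ i))\<^sup>2)"
    unfolding cinner_def of_real_sum
    by (intro sum.cong refl) (subst complex_norm_square, simp add: mult.commute)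
  also have "(\<Sum>i\<in>UNIV. (norm (x $ i))\<^sup>2) = (norm x)\<^sup>2"
    unfolding norm_vec_def L2_set_def by (simp add: sum_nonneg)
  finally show ?thesis .
qed

lemma cnj_mult_self: "cnj z * z = complex_of_real ((cmod z)\<^sup>2)"
  by (metis complex_norm_square mult.commute)

lemma cinner_self_eq_zero [simp]: "cinner x x = 0 \<longleftrightarrow> x = 0"
  by (simp add: cinner_self)

lemma continuous_on_cinner_right: "continuous_on UNIV (cinner v)"
  unfolding cinner_def by (intro continuous_intros)

lemma sum_cinner_form: "(\<Sum>i\<in>UNIV. \<Sum>j\<in>UNIV. cnj (x $ i) * M $ i $ j * x $ j) = cinner x (M *v x)"
  unfolding cinner_def matrix_vector_mult_def by (simp add: sum_distrib_left mult.assoc)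

lemma hermitianD: "hermitian M \<Longrightarrow> cnj (M $ j $ i) = M $ i $ j"
  unfolding hermitian_def cnj_transpose_def by (metis vec_lambda_beta)

lemma hermitianI: "(\<And>i j. cnj (M $ j $ i) = M $ i $ j) \<Longrightarrow> hermitian M"
  unfolding hermitian_def cnj_transpose_def by (simp add: vec_eq_iff)

lemma hermitian_diff: "hermitian A \<Longrightarrow> hermitian B \<Longrightarrow> hermitian (A - B)"
  by (intro hermitianI) (simp add: hermitianD)

lemma cinner_hermitian:
  assumes "hermitian M"
  shows "cinner x (M *v y) = cinner (M *v x) y"
proof -
  have "cinner (M *v x) y = (\<Sum>i\<in>UNIV. \<Sum>j\<in>UNIV. cnj (M $ i $ j) * cnj (x $ j) * y $ i)"
    unfolding cinner_def matrix_vector_mult_def by (simp add: sum_distrib_right)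
  also have "\<dots> = cinner x (M *v y)"
    unfolding cinner_def matrix_vector_mult_def
    by (subst sum.swap) (simp add: hermitianD[OF assms] sum_distrib_left mult_ac)
  finally show ?thesis ..
qed

lemma hermitian_form_real: "hermitian M \<Longrightarrow> Im (cinner x (M *v x)) = 0"
  by (metis Reals_cnj_iff cinner_hermitian cnj_cinner complex_is_Real_iff)

lemma posdef_form_pos: "posdef M \<Longrightarrow> x \<noteq> 0 \<Longrightarrow> Re (cinner x (M *v x)) > 0"
  unfolding posdef_def sum_cinner_form by auto

lemma posdef_invertible: "posdef (M::complex^'n^'n) \<Longrightarrow> invertible M"
  using posdef_form_pos
  by (fastforce simp: invertible_left_inverse matrix_left_invertible_ker)

lemma linear_term_zero_if_quadratic_nonpos:
  fixes b c :: real
  assumes "\<And>t. 2 * t * b + t\<^sup>2 * c \<le> 0"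
  shows "b = 0"
proof (rule ccontr)
  assume "b \<noteq> 0"
  define t where "t = b / (\<bar>c\<bar> + 1)"
  have "t\<^sup>2 * (- \<bar>c\<bar>) \<le> t\<^sup>2 * c"
    by (rule mult_left_mono) auto
  moreover have "t\<^sup>2 * \<bar>c\<bar> \<le> t * b"
  proof -
    have "t\<^sup>2 * \<bar>c\<bar> = (b\<^sup>2 / (\<bar>c\<bar> + 1)) * (\<bar>c\<bar> / (\<bar>c\<bar> + 1))"
      by (simp add: t_def power2_eq_square)
    also have "\<dots> \<le> b\<^sup>2 / (\<bar>c\<bar> + 1)"
      by (rule mult_left_le) auto
    also have "\<dots> = t * b"
      by (simp add: t_def power2_eq_square)
    finally show ?thesis .
  qed
  moreover have "t * b > 0"
    using \<open>b \<noteq> 0\<close> by (simp add: t_def power2_eq_square[symmetric] add_pos_nonneg)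
  ultimately have "2 * t * b + t\<^sup>2 * c > 0"
    by linarith
  with assms[of t] show False
    by simp
qed

lemma hermitian_form_add_scaled:
  assumes "hermitian A"
  shows "Re (cinner (x + of_real t *s y) (A *v (x + of_real t *s y))) =
     Re (cinner x (A *v x)) + 2 * t * Re (cinner y (A *v x)) + t\<^sup>2 * Re (cinner y (A *v y))"
proof -
  have "cinner x (A *v y) = cnj (cinner y (A *v x))"
    by (simp add: cinner_hermitian[OF assms] cnj_cinner)
  then show ?thesis
    by (simp add: matrix_vector_right_distrib matrix_vector_mult_scale cinner_add_left
        cinner_add_right cinner_scale_left cinner_scale_right power2_eq_square algebra_simps)
qed

lemma norm_add_scaled_orthogonal:
  assumes "cinner x y = 0"
  shows "(norm (x + of_real t *s y))\<^sup>2 = (norm x)\<^sup>2 + t\<^sup>2 * (norm y)\<^sup>2"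
proof -
  have "complex_of_real ((norm (x + of_real t *s y))\<^sup>2) = cinner (x + of_real t *s y) (x + of_real t *s y)"
    by (simp add: cinner_self)
  also have "\<dots> = cinner x x + of_real (t\<^sup>2) * cinner y y"
    using assms cnj_cinner[of x y]
    by (simp add: cinner_add_left cinner_add_right cinner_scale_left cinner_scale_right
        power2_eq_square)
  also have "\<dots> = complex_of_real ((norm x)\<^sup>2 + t\<^sup>2 * (norm y)\<^sup>2)"
    by (simp add: cinner_self)
  finally show ?thesis
    using of_real_eq_iff by blast
qed

text \<open>A maximiser of the Rayleigh quotient on an invariant subspace is an eigenvector: the first
  variation of the quotient in every orthogonal direction of the subspace vanishes.\<close>
lemma hermitian_rayleigh_maximiser_eigenvector:
  fixes A :: "complex^'n^'n"
  assumes herm: "hermitian A" and W: "vec.subspace W" and invariant: "\<And>x. x \<in> W \<Longrightarrow> A *v x \<in> W"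
    and "x \<in> W" and unit: "norm x = 1"
    and max: "\<And>z. z \<in> W \<Longrightarrow> Re (cinner z (A *v z)) \<le> Re (cinner x (A *v x)) * (norm z)\<^sup>2"
  shows "A *v x = cinner x (A *v x) *s x"
proof -
  have orthogonal_Re: "Re (cinner y (A *v x)) = 0" if "y \<in> W" "cinner x y = 0" for y
  proof (rule linear_term_zero_if_quadratic_nonpos)
    fix t :: real
    have "x + of_real t *s y \<in> W"
      using W \<open>x \<in> W\<close> \<open>y \<in> W\<close> by (simp add: vec.subspace_add vec.subspace_scale)
    from max[OF this] show "2 * t * Re (cinner y (A *v x)) +
        t\<^sup>2 * (Re (cinner y (A *v y)) - Re (cinner x (A *v x)) * (norm y)\<^sup>2) \<le> 0"
      unfolding hermitian_form_add_scaled[OF herm] norm_add_scaled_orthogonal[OF \<open>cinner x y = 0\<close>]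
      using unit by (simp add: algebra_simps)
  qed
  have orthogonal: "cinner y (A *v x) = 0" if "y \<in> W" "cinner x y = 0" for y
  proof -
    have "\<i> *s y \<in> W" "cinner x (\<i> *s y) = 0"
      using that W by (simp_all add: vec.subspace_scale cinner_scale_right)
    then have "Re (cinner (\<i> *s y) (A *v x)) = 0"
      by (rule orthogonal_Re)
    with orthogonal_Re[OF that] show ?thesis
      by (simp add: cinner_scale_left complex_eq_iff)
  qed
  define y where "y = A *v x - cinner x (A *v x) *s x"
  have "y \<in> W"
    using W invariant \<open>x \<in> W\<close> by (simp add: y_def vec.subspace_diff vec.subspace_scale)
  moreover have "cinner x x = 1"
    using unit by (simp add: cinner_self)
  then have "cinner x y = 0"
    by (simp add: y_def cinner_diff_right cinner_scale_right)
  ultimately have "cinner y (A *v x) = 0" "cinner y x = 0"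
    using orthogonal cnj_cinner[of x y] by auto
  have "cinner y y = cinner y (A *v x - cinner x (A *v x) *s x)"
    by (simp add: y_def)
  also have "\<dots> = 0"
    using \<open>cinner y (A *v x) = 0\<close> \<open>cinner y x = 0\<close> by (simp add: cinner_diff_right cinner_scale_right)
  finally show ?thesis
    by (simp add: y_def)
qed

lemma hermitian_invariant_subspace_eigenvector:
  fixes A :: "complex^'n^'n"
  assumes herm: "hermitian A" and W: "vec.subspace W" "closed W"
    and invariant: "\<And>x. x \<in> W \<Longrightarrow> A *v x \<in> W" and "W \<noteq> {0}"
  obtains u where "u \<in> W" "norm u = 1" "A *v u = cinner u (A *v u) *s u"
proof -
  define f where "f x = Re (cinner x (A *v x))" for x
  have normalise: "(1 / norm z) *\<^sub>R z \<in> sphere 0 1 \<inter> W" if "z \<in> W" "z \<noteq> 0" for z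
    using that vec.subspace_scale[OF W(1), of z "of_real (1 / norm z)", unfolded vector_scalar_mult_of_real]
    by simp
  obtain w where "w \<in> W" "w \<noteq> 0"
    using \<open>W \<noteq> {0}\<close> vec.subspace_0[OF W(1)] by blast
  moreover have "compact (sphere 0 1 \<inter> W)"
    using W by (intro compact_Int_closed) auto
  moreover have "continuous_on (sphere 0 1 \<inter> W) f"
    unfolding f_def cinner_def matrix_vector_mult_def by (intro continuous_intros)
  ultimately obtain x where x: "x \<in> sphere 0 1 \<inter> W" and x_max: "\<And>y. y \<in> sphere 0 1 \<inter> W \<Longrightarrow> f y \<le> f x"
    using continuous_attains_sup[of "sphere 0 1 \<inter> W" f] normalise by blast
  have "f z \<le> f x * (norm z)\<^sup>2" if "z \<in> W" for z
  proof (cases "z = 0")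
    case False
    have "f (r *\<^sub>R z) = r\<^sup>2 * f z" for r
      unfolding f_def
      by (simp add: matrix_vector_mult_scale cinner_scale_left cinner_scale_right power2_eq_square
          flip: vector_scalar_mult_of_real)
    with x_max[OF normalise[OF that False]] False show ?thesis
      by (simp add: power_divide field_simps)
  qed (simp add: f_def)
  with x show ?thesis
    using hermitian_rayleigh_maximiser_eigenvector[OF herm W(1) invariant] that
    unfolding f_def by auto
qed

definition orthonormal_set :: "(complex^'n) set \<Rightarrow> bool" where
  "orthonormal_set S \<longleftrightarrow> finite S \<and> (\<forall>v\<in>S. norm v = 1) \<and> (\<forall>v\<in>S. \<forall>w\<in>S. v \<noteq> w \<longrightarrow> cinner v w = 0)"

lemma cinner_orthonormal_sum:
  assumes "orthonormal_set S" and "w \<in> S"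
  shows "cinner w (\<Sum>v\<in>S. c v *s v) = c w"
proof -
  have "cinner w (\<Sum>v\<in>S. c v *s v) = c w * cinner w w + (\<Sum>v\<in>S - {w}. c v * cinner w v)"
    using assms unfolding orthonormal_set_def
    by (simp add: cinner_sum_right cinner_scale_right cinner_add_right sum.remove[of _ w])
  also have "\<dots> = c w"
    using assms unfolding orthonormal_set_def
    by (subst sum.neutral) (auto simp: cinner_self)
  finally show ?thesis .
qed

lemma orthonormal_set_card_le:
  fixes S :: "(complex^'n) set"
  assumes "orthonormal_set S"
  shows "card S \<le> CARD('n)"
proof -
  have "vec.independent S"
    unfolding vec.independent_explicit
  proof (intro conjI allI impI ballI)
    show "finite S"
      using assms orthonormal_set_def by blast
    fix c v
    assume "(\<Sum>v\<in>S. c v *s v) = 0" and "v \<in> S"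
    then show "c v = 0"
      using cinner_orthonormal_sum[OF assms \<open>v \<in> S\<close>, of c] by simp
  qed
  then have "card S \<le> vec.dim S"
    using vec.independent_bound_general by blast
  also have "\<dots> \<le> CARD('n)"
    by (rule dim_subset_UNIV_cart_gen)
  finally show ?thesis .
qed

lemma hermitian_eigenvectors_orthogonal_complement:
  fixes A :: "complex^'n^'n"
  assumes herm: "hermitian A" and eigen: "\<And>v. v \<in> S \<Longrightarrow> A *v v = cinner v (A *v v) *s v"
  defines "W \<equiv> {x. \<forall>v\<in>S. cinner v x = 0}"
  shows "vec.subspace W" and "closed W" and "\<And>x. x \<in> W \<Longrightarrow> A *v x \<in> W"
proof -
  show "vec.subspace W"
    by (simp add: W_def vec.subspace_def cinner_add_right cinner_scale_right)
  show "closed W"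
    unfolding W_def Collect_ball_eq
    by (intro closed_INT ballI closed_Collect_eq continuous_on_cinner_right continuous_on_const)
  fix x
  assume "x \<in> W"
  have "cinner v (A *v x) = cnj (cinner v (A *v v)) * cinner v x" if "v \<in> S" for v
    using eigen[OF that] by (metis cinner_hermitian[OF herm] cinner_scale_left)
  with \<open>x \<in> W\<close> show "A *v x \<in> W"
    by (simp add: W_def)
qed

text \<open>A maximal orthonormal family of eigenvectors spans: otherwise its orthogonal complement is a
  nonzero invariant subspace, which contains a further eigenvector.\<close>
lemma hermitian_orthonormal_eigenbasis:
  fixes A :: "complex^'n^'n"
  assumes herm: "hermitian A"
  obtains S where "orthonormal_set S" and "\<And>v. v \<in> S \<Longrightarrow> A *v v = cinner v (A *v v) *s v"
    and "\<And>x. x = (\<Sum>v\<in>S. cinner v x *s v)"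
proof -
  define eigen where "eigen S \<longleftrightarrow> orthonormal_set S \<and> (\<forall>v\<in>S. A *v v = cinner v (A *v v) *s v)"
    for S :: "(complex^'n) set"
  have "eigen {}"
    by (simp add: eigen_def orthonormal_set_def)
  then obtain S where S: "eigen S" and S_max: "\<And>T. eigen T \<Longrightarrow> card T \<le> card S"
    using ex_has_greatest_nat[of eigen "{}" card "CARD('n) + 1"] orthonormal_set_card_le
    by (metis eigen_def less_Suc_eq_le Suc_eq_plus1)
  then have "finite S"
    by (simp add: eigen_def orthonormal_set_def)
  define W where "W = {x. \<forall>v\<in>S. cinner v x = 0}"
  have "W = {0}"
  proof (rule ccontr)
    assume "W \<noteq> {0}"
    have S_eigen: "A *v v = cinner v (A *v v) *s v" if "v \<in> S" for v
      using S that by (simp add: eigen_def)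
    note complement = hermitian_eigenvectors_orthogonal_complement[where S = S, OF herm S_eigen, folded W_def]
    obtain u where u: "u \<in> W" "norm u = 1" "A *v u = cinner u (A *v u) *s u"
      using hermitian_invariant_subspace_eigenvector[OF herm complement \<open>W \<noteq> {0}\<close>] by blast
    then have "u \<notin> S"
      by (auto simp: W_def cinner_self)
    moreover have "cinner v u = 0" "cinner u v = 0" if "v \<in> S" for v
      using u that cnj_cinner[of u v] by (auto simp: W_def)
    then have "eigen (insert u S)"
      using S u \<open>finite S\<close> by (auto simp: eigen_def orthonormal_set_def)
    ultimately show False
      using S_max[of "insert u S"] \<open>finite S\<close> by simp
  qed
  have expansion: "x = (\<Sum>v\<in>S. cinner v x *s v)" for x
  proof -
    have "x - (\<Sum>v\<in>S. cinner v x *s v) \<in> W"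
      using S cinner_orthonormal_sum[of S _ "\<lambda>v. cinner v x"]
      by (simp add: W_def eigen_def cinner_diff_right)
    then show ?thesis
      using \<open>W = {0}\<close> by simp
  qed
  show ?thesis
    using S expansion by (intro that) (auto simp: eigen_def)
qed

lemma posdef_orthonormal_eigenbasis:
  fixes A :: "complex^'n^'n"
  assumes "posdef A"
  obtains S ev where "orthonormal_set S" and "\<And>v. v \<in> S \<Longrightarrow> ev v > 0"
    and "\<And>v. v \<in> S \<Longrightarrow> A *v v = of_real (ev v) *s v" and "\<And>x. x = (\<Sum>v\<in>S. cinner v x *s v)"
proof -
  have herm: "hermitian A"
    using assms posdef_def by blast
  obtain S where S: "orthonormal_set S" and eigen: "\<And>v. v \<in> S \<Longrightarrow> A *v v = cinner v (A *v v) *s v"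
    and expansion: "\<And>x. x = (\<Sum>v\<in>S. cinner v x *s v)"
    using hermitian_orthonormal_eigenbasis[OF herm] by blast
  define ev where "ev v = Re (cinner v (A *v v))" for v
  have "ev v > 0" if "v \<in> S" for v
    using that S posdef_form_pos[OF assms, of v] unfolding ev_def orthonormal_set_def by force
  moreover have "A *v v = of_real (ev v) *s v" if "v \<in> S" for v
  proof -
    have "of_real (ev v) = cinner v (A *v v)"
      using hermitian_form_real[OF herm, of v] by (simp add: ev_def complex_eq_iff)
    with eigen[OF that] show ?thesis
      by simp
  qed
  ultimately show ?thesis
    using that S expansion by blast
qed

definition spectral_matrix :: "(complex^'n \<Rightarrow> real) \<Rightarrow> (complex^'n) set \<Rightarrow> complex^'n^'n" where
  "spectral_matrix \<mu> S = (\<chi> i j. \<Sum>v\<in>S. of_real (\<mu> v) * (v $ i * cnj (v $ j)))"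

lemma spectral_matrix_apply:
  "spectral_matrix \<mu> S *v x = (\<Sum>v\<in>S. (of_real (\<mu> v) * cinner v x) *s v)"
  unfolding spectral_matrix_def matrix_vector_mult_def cinner_def
  by (simp add: vec_eq_iff sum_component sum_distrib_left sum_distrib_right mult_ac)
     (intro allI sum.swap)

lemma posdef_spectral_matrix:
  fixes \<mu> :: "complex^'n \<Rightarrow> real" and S :: "(complex^'n) set"
  assumes S: "orthonormal_set S" and pos: "\<And>v. v \<in> S \<Longrightarrow> \<mu> v > 0"
    and expansion: "\<And>x. x = (\<Sum>v\<in>S. cinner v x *s v)"
  shows "posdef (spectral_matrix \<mu> S)"
  unfolding posdef_def sum_cinner_form
proof (intro conjI allI impI)
  show "hermitian (spectral_matrix \<mu> S)"
    by (rule hermitianI) (simp add: spectral_matrix_def mult.commute)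
  fix x :: "complex^'n"
  assume "x \<noteq> 0"
  then obtain w where "w \<in> S" "cinner w x \<noteq> 0"
    using expansion[of x] by (metis (no_types, lifting) sum.neutral vector_smult_lzero)
  have "cinner x (spectral_matrix \<mu> S *v x) = (\<Sum>v\<in>S. of_real (\<mu> v * (norm (cinner v x))\<^sup>2))"
    unfolding spectral_matrix_apply cinner_sum_right cinner_scale_right
  proof (intro sum.cong refl)
    fix v
    show "of_real (\<mu> v) * cinner v x * cinner x v = of_real (\<mu> v * (norm (cinner v x))\<^sup>2)"
      by (simp add: mult.assoc cnj_cinner[of v x, symmetric] complex_norm_square[symmetric])
  qed
  then have "Re (cinner x (spectral_matrix \<mu> S *v x)) = (\<Sum>v\<in>S. \<mu> v * (norm (cinner v x))\<^sup>2)"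
    by simp
  also have "\<dots> > 0"
    using S pos \<open>w \<in> S\<close> \<open>cinner w x \<noteq> 0\<close>
    by (intro sum_pos2[of _ w]) (auto simp: orthonormal_set_def less_imp_le)
  finally show "Re (cinner x (spectral_matrix \<mu> S *v x)) > 0" .
qed

lemma posdef_sqrt_exists:
  fixes A :: "complex^'n^'n"
  assumes "posdef A"
  obtains R where "posdef R" and "R ** R = A"
proof -
  obtain S ev where S: "orthonormal_set S" and ev_pos: "\<And>v. v \<in> S \<Longrightarrow> ev v > 0"
    and eigen: "\<And>v. v \<in> S \<Longrightarrow> A *v v = of_real (ev v) *s v"
    and expansion: "\<And>x. x = (\<Sum>v\<in>S. cinner v x *s v)"
    using posdef_orthonormal_eigenbasis[OF assms] by blast
  define R where "R = spectral_matrix (\<lambda>v. sqrt (ev v)) S"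
  have "(R ** R) *v x = A *v x" for x
  proof -
    have "(R ** R) *v x = (\<Sum>v\<in>S. (of_real (sqrt (ev v)) * (of_real (sqrt (ev v)) * cinner v x)) *s v)"
      unfolding matrix_vector_mul_assoc[symmetric] R_def spectral_matrix_apply
      using cinner_orthonormal_sum[OF S] by (intro sum.cong) auto
    also have "\<dots> = (\<Sum>v\<in>S. cinner v x *s (of_real (ev v) *s v))"
    proof (intro sum.cong refl)
      fix v
      assume "v \<in> S"
      then have "of_real (sqrt (ev v)) * of_real (sqrt (ev v)) = complex_of_real (ev v)"
        using ev_pos[of v] by (simp flip: of_real_mult)
      then show "(of_real (sqrt (ev v)) * (of_real (sqrt (ev v)) * cinner v x)) *s v =
          cinner v x *s (of_real (ev v) *s v)"
        by (simp add: vec_eq_iff mult_ac)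
    qed
    also have "\<dots> = A *v (\<Sum>v\<in>S. cinner v x *s v)"
      by (simp add: eigen matrix_vector_mult_scale matrix_vector_mult_sum)
    finally show ?thesis
      using expansion[of x] by simp
  qed
  then have "R ** R = A"
    by (simp add: matrix_eq)
  moreover have "posdef R"
    unfolding R_def using S ev_pos expansion by (intro posdef_spectral_matrix) auto
  ultimately show ?thesis
    using that by blast
qed

lemma trace_hermitian_sandwich:
  fixes D R :: "complex^'n^'n"
  assumes "hermitian D"
  shows "trace (D ** R ** D) = (\<Sum>i\<in>UNIV. cinner (column i D) (R *v column i D))"
proof -
  have "trace (D ** R ** D) = (\<Sum>i\<in>UNIV. \<Sum>k\<in>UNIV. \<Sum>l\<in>UNIV. D $ i $ k * R $ k $ l * D $ l $ i)"
    unfolding trace_def matrix_matrix_mult_def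
    by (simp add: sum_distrib_right) (intro sum.cong refl sum.swap)
  also have "\<dots> = (\<Sum>i\<in>UNIV. \<Sum>k\<in>UNIV. \<Sum>l\<in>UNIV. cnj (D $ k $ i) * R $ k $ l * D $ l $ i)"
    by (simp add: hermitianD[OF assms])
  also have "\<dots> = (\<Sum>i\<in>UNIV. cinner (column i D) (R *v column i D))"
    unfolding cinner_def matrix_vector_mult_def column_def
    by (simp add: sum_distrib_left mult_ac)
  finally show ?thesis .
qed

text \<open>For D = R1 - R2 one has R1 D + D R2 = R1^2 - R2^2 = 0, so tr (D R1 D) + tr (D R2 D) = 0; both
  traces are sums of nonnegative forms over the columns of D, which must therefore vanish.\<close>
lemma posdef_sqrt_unique:
  fixes R1 R2 :: "complex^'n^'n"
  assumes R1: "posdef R1" and R2: "posdef R2" and eq: "R1 ** R1 = R2 ** R2"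
  shows "R1 = R2"
proof -
  define D where "D = R1 - R2"
  have herm: "hermitian D"
    using R1 R2 hermitian_diff posdef_def by (auto simp: D_def)
  have "D ** (R1 ** D + D ** R2) = 0"
    by (simp add: D_def matrix_diff_ldistrib matrix_diff_rdistrib eq)
  then have "trace (D ** R1 ** D) + trace (D ** R2 ** D) = 0"
    by (metis matrix_add_ldistrib matrix_mul_assoc trace_add trace_mul_sym trace_0 mat_0)
  then have "(\<Sum>i\<in>UNIV. Re (cinner (column i D) (R1 *v column i D)) + Re (cinner (column i D) (R2 *v column i D))) = 0"
    unfolding trace_hermitian_sandwich[OF herm]
    by (simp add: sum.distrib flip: Re_sum) (metis plus_complex.sel(1) zero_complex.sel(1))
  moreover have "Re (cinner (column i D) (R1 *v column i D)) + Re (cinner (column i D) (R2 *v column i D)) \<ge> 0" for i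
    using posdef_form_pos[OF R1, of "column i D"] posdef_form_pos[OF R2, of "column i D"]
    by (cases "column i D = 0") auto
  ultimately have "Re (cinner (column i D) (R1 *v column i D)) + Re (cinner (column i D) (R2 *v column i D)) = 0" for i
    by (simp add: sum_nonneg_eq_0_iff)
  then have "column i D = 0" for i
    using posdef_form_pos[OF R1, of "column i D"] posdef_form_pos[OF R2, of "column i D"]
    by (metis add_pos_pos less_irrefl)
  then show ?thesis
    by (simp add: D_def column_def vec_eq_iff)
qed

lemma hpd_sqrt:
  fixes C :: "complex^'n^'n"
  assumes "posdef C"
  shows "posdef (hpd_sqrt C)" and "hpd_sqrt C ** hpd_sqrt C = C"
proof -
  have "\<exists>!R. posdef R \<and> R ** R = C"
    using posdef_sqrt_exists[OF assms] posdef_sqrt_unique by metis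
  then have "posdef (hpd_sqrt C) \<and> hpd_sqrt C ** hpd_sqrt C = C"
    unfolding hpd_sqrt_def by (rule theI')
  then show "posdef (hpd_sqrt C)" and "hpd_sqrt C ** hpd_sqrt C = C"
    by auto
qed

section \<open>Wirtinger derivatives\<close>

lemma cwirt_eq:
  assumes "(f has_derivative D) (at s)"
  shows "cwirt f s = (D 1 + \<i> * D \<i>) / 2"
  unfolding cwirt_def frechet_derivative_at[OF assms, symmetric] ..

lemma vwirt_nth_eq:
  assumes "(f has_derivative D) (at t)"
  shows "vwirt f t $ k = (D (axis k 1) + \<i> * D (axis k \<i>)) / 2"
  unfolding vwirt_def frechet_derivative_at[OF assms, symmetric] by simp

lemma cwirt_of_real_ln:
  fixes p :: "complex \<Rightarrow> real"
  assumes "p differentiable (at s)" and "p s > 0"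
  shows "cwirt (\<lambda>t. complex_of_real (ln (p t))) s = cwirt (\<lambda>t. complex_of_real (p t)) s / of_real (p s)"
proof -
  obtain D where D: "(p has_derivative D) (at s)"
    using assms(1) by (auto simp: differentiable_def)
  have "((\<lambda>t. complex_of_real (ln (p t))) has_derivative (\<lambda>h. of_real (D h * inverse (p s)))) (at s)"
    by (intro has_derivative_of_real has_derivative_ln assms(2) D)
  moreover have "((\<lambda>t. complex_of_real (p t)) has_derivative (\<lambda>h. of_real (D h))) (at s)"
    by (intro has_derivative_of_real D)
  ultimately show ?thesis
    by (simp add: cwirt_eq divide_simps)
qed

lemma vwirt_of_real_ln:
  fixes p :: "complex^'n \<Rightarrow> real"
  assumes "p differentiable (at z)" and "p z > 0"
  shows "vwirt (\<lambda>t. complex_of_real (ln (p t))) z $ k = vwirt (\<lambda>t. complex_of_real (p t)) z $ k / of_real (p z)"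
proof -
  obtain D where D: "(p has_derivative D) (at z)"
    using assms(1) by (auto simp: differentiable_def)
  have "((\<lambda>t. complex_of_real (ln (p t))) has_derivative (\<lambda>h. of_real (D h * inverse (p z)))) (at z)"
    by (intro has_derivative_of_real has_derivative_ln assms(2) D)
  moreover have "((\<lambda>t. complex_of_real (p t)) has_derivative (\<lambda>h. of_real (D h))) (at z)"
    by (intro has_derivative_of_real D)
  ultimately show ?thesis
    by (simp add: vwirt_nth_eq divide_simps)
qed

lemma cwirt_mult:
  assumes "(f has_derivative f') (at s)" and "(g has_derivative g') (at s)"
  shows "cwirt (\<lambda>t. f t * g t) s = f s * cwirt g s + g s * cwirt f s"
  by (simp add: cwirt_eq[OF has_derivative_mult[OF assms]] cwirt_eq[OF assms(1)] cwirt_eq[OF assms(2)]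
      algebra_simps add_divide_distrib)

lemma vwirt_nth_mult:
  assumes "(f has_derivative f') (at z)" and "(g has_derivative g') (at z)"
  shows "vwirt (\<lambda>t. f t * g t) z $ k = f z * vwirt g z $ k + g z * vwirt f z $ k"
  by (simp add: vwirt_nth_eq[OF has_derivative_mult[OF assms]] vwirt_nth_eq[OF assms(1)]
      vwirt_nth_eq[OF assms(2)] algebra_simps add_divide_distrib)

lemma cwirt_id: "cwirt (\<lambda>t. t) s = 0"
  and cwirt_cnj: "cwirt cnj s = 1"
  by (simp_all add: cwirt_eq[OF has_derivative_ident]
      cwirt_eq[OF has_derivative_cnj[OF has_derivative_ident]])

lemma has_derivative_vec_nth [derivative_intros]:
  "(f has_derivative f') F \<Longrightarrow> ((\<lambda>x. f x $ i) has_derivative (\<lambda>x. f' x $ i)) F"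
  by (rule bounded_linear.has_derivative[OF bounded_linear_vec_nth])

lemma vwirt_nth_vec_nth: "vwirt (\<lambda>t. t $ j) z $ k = 0"
  and vwirt_nth_cnj_vec_nth: "vwirt (\<lambda>t. cnj (t $ j)) z $ k = (if k = j then 1 else 0)"
  by (simp_all add: vwirt_nth_eq[OF has_derivative_vec_nth[OF has_derivative_ident]]
      vwirt_nth_eq[OF has_derivative_cnj[OF has_derivative_vec_nth[OF has_derivative_ident]]] axis_def)

section \<open>The score of the mixing model at h = 0\<close>

lemma hpart_param [simp]: "hpart (param h g) = h"
  and gpart_param [simp]: "gpart (param h g) = g"
  and hpart_axis_Inl [simp]: "hpart (axis (Inl k) c) = axis k c"
  and gpart_axis_Inl [simp]: "gpart (axis (Inl k) c) = 0"
  and hpart_axis_Inr [simp]: "hpart (axis (Inr k) c) = 0"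
  and gpart_axis_Inr [simp]: "gpart (axis (Inr k) c) = axis k c"
  by (simp_all add: hpart_def gpart_def param_def axis_def vec_eq_iff)

lemma hH_zero [simp]: "hH 0 y = 0"
  and hH_axis [simp]: "hH (axis k c) y = cnj c * y $ k"
  by (simp_all add: hH_def axis_def if_distrib if_distribR sum.delta cong: if_cong)

lemma mixA_zero: "mixA 0 g (s, z) = (s, s *s g - z)"
  unfolding mixA_def by (simp add: vec_eq_iff)

lemma has_derivative_wHx_at_param_zero:
  "((\<lambda>t. wHx (hpart t) (gpart t) (x1, x2)) has_derivative (\<lambda>dt. hH (hpart dt) (x2 - x1 *s g)))
     (at (param 0 g))"
proof -
  have "((\<lambda>t. (1 - (\<Sum>i\<in>UNIV. cnj (t $ Inl i) * t $ Inr i)) * x1 + (\<Sum>i\<in>UNIV. cnj (t $ Inl i) * x2 $ i))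
      has_derivative (\<lambda>dt. - (\<Sum>i\<in>UNIV. cnj (dt $ Inl i) * param 0 g $ Inr i + cnj (param 0 g $ Inl i) * dt $ Inr i) * x1
         + (\<Sum>i\<in>UNIV. cnj (dt $ Inl i) * x2 $ i))) (at (param 0 g))"
    by (auto intro!: derivative_eq_intros simp: algebra_simps)
  moreover have "(\<lambda>dt. - (\<Sum>i\<in>UNIV. cnj (dt $ Inl i) * param 0 g $ Inr i + cnj (param 0 g $ Inl i) * dt $ Inr i) * x1
         + (\<Sum>i\<in>UNIV. cnj (dt $ Inl i) * x2 $ i)) = (\<lambda>dt. hH (hpart dt) (x2 - x1 *s g))"
    by (simp add: fun_eq_iff param_def hH_def hpart_def algebra_simps sum_distrib_right
        sum_distrib_left sum_subtractf)
  ultimately show ?thesis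
    unfolding wHx_def hH_def hpart_def gpart_def by simp
qed

lemma has_derivative_Bx:
  fixes x2 :: "complex^'n"
  shows "((\<lambda>t. Bx (gpart t) (x1, x2)) has_derivative (\<lambda>dt. x1 *s gpart dt)) (at t0)"
proof -
  have "bounded_linear (\<lambda>dt :: complex^('n + 'n). x1 *s gpart dt)"
    unfolding linear_conv_bounded_linear[symmetric]
    by (intro linearI) (simp_all add: gpart_def vec_eq_iff algebra_simps scaleR_conv_of_real[where 'a = complex])
  from bounded_linear.has_derivative[OF this has_derivative_ident]
  show ?thesis
    unfolding Bx_def by (auto intro!: derivative_eq_intros)
qed

lemma linear_complex_decomp:
  fixes D :: "complex \<Rightarrow> real"
  assumes "linear D"
  shows "D z = Re z * D 1 + Im z * D \<i>"
proof -
  have "z = Re z *\<^sub>R 1 + Im z *\<^sub>R \<i>"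
    by (simp add: complex_eq_iff)
  then have "D z = D (Re z *\<^sub>R 1 + Im z *\<^sub>R \<i>)"
    by (rule arg_cong)
  then show ?thesis
    using assms by (simp add: linear_add linear_scale)
qed

lemma linear_axis_decomp:
  fixes D :: "complex^'n \<Rightarrow> real"
  assumes "linear D"
  shows "D (c *s axis k 1) = Re c * D (axis k 1) + Im c * D (axis k \<i>)"
proof -
  have "c *s axis k 1 = Re c *\<^sub>R axis k 1 + Im c *\<^sub>R (axis k \<i> :: complex^'n)"
    by (simp add: vec_eq_iff axis_def complex_eq_iff)
  then have "D (c *s axis k 1) = D (Re c *\<^sub>R axis k 1 + Im c *\<^sub>R (axis k \<i> :: complex^'n))"
    by (rule arg_cong)
  then show ?thesis
    using assms by (simp add: linear_add linear_scale)
qed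

lemma has_derivative_loglik_at_param_zero:
  fixes ps :: "complex \<Rightarrow> real" and pz :: "complex^'n \<Rightarrow> real" and g :: "complex^'n"
  assumes "(ps has_derivative Dps) (at s)" "ps s > 0" and "(pz has_derivative Dpz) (at z)" "pz z > 0"
  shows "((\<lambda>t. complex_of_real (loglik ps pz (hpart t) (gpart t) (s, s *s g - z))) has_derivative
      (\<lambda>dt. of_real (Dps (hH (hpart dt) (- z)) * inverse (ps s) + Dpz (s *s gpart dt) * inverse (pz z))))
      (at (param 0 g))"
proof -
  have wHx: "((\<lambda>t. wHx (hpart t) (gpart t) (s, s *s g - z)) has_derivative (\<lambda>dt. hH (hpart dt) (- z)))
      (at (param 0 g))"
    using has_derivative_wHx_at_param_zero[of s "s *s g - z" g] by simp
  have "((\<lambda>t. ln (ps (wHx (hpart t) (gpart t) (s, s *s g - z)))) has_derivative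
      (\<lambda>dt. Dps (hH (hpart dt) (- z)) * inverse (ps s))) (at (param 0 g))"
    using has_derivative_ln[OF _ has_derivative_compose[OF wHx, of ps Dps]] assms(1,2)
    by (simp add: wHx_def)
  moreover have "((\<lambda>t. ln (pz (Bx (gpart t) (s, s *s g - z)))) has_derivative
      (\<lambda>dt. Dpz (s *s gpart dt) * inverse (pz z))) (at (param 0 g))"
    using has_derivative_ln[OF _ has_derivative_compose[OF has_derivative_Bx[of s "s *s g - z" "param 0 g"],
        of pz Dpz]] assms(3,4)
    by (simp add: Bx_def)
  ultimately show ?thesis
    unfolding loglik_def by (intro has_derivative_of_real has_derivative_add)
qed

lemma score_theta_at_param_zero:
  fixes ps :: "complex \<Rightarrow> real" and pz :: "complex^'n \<Rightarrow> real" and g :: "complex^'n"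
  assumes ps: "ps differentiable (at s)" "ps s > 0" and pz: "pz differentiable (at z)" "pz z > 0"
  shows "score_theta ps pz (param 0 g) (mixA 0 g (s, z)) $ Inl i = cnj (score_s ps s) * z $ i"
    and "score_theta ps pz (param 0 g) (mixA 0 g (s, z)) $ Inr i = - cnj s * score_z pz z $ i"
proof -
  define Dps where "Dps = frechet_derivative ps (at s)"
  define Dpz where "Dpz = frechet_derivative pz (at z)"
  have Dps: "(ps has_derivative Dps) (at s)" "linear Dps"
    using ps(1) frechet_derivative_works linear_frechet_derivative by (auto simp: Dps_def)
  have Dpz: "(pz has_derivative Dpz) (at z)" "linear Dpz"
    using pz(1) frechet_derivative_works linear_frechet_derivative by (auto simp: Dpz_def)
  define DL where "DL dt = complex_of_real
      (Dps (hH (hpart dt) (- z)) * inverse (ps s) + Dpz (s *s gpart dt) * inverse (pz z))" for dt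
  have score: "score_theta ps pz (param 0 g) (mixA 0 g (s, z)) $ k = (DL (axis k 1) + \<i> * DL (axis k \<i>)) / 2" for k
    unfolding score_theta_def mixA_zero DL_def
    by (rule vwirt_nth_eq[OF has_derivative_loglik_at_param_zero[OF Dps(1) ps(2) Dpz(1) pz(2)]])
  have score_s: "score_s ps s = - ((of_real (Dps 1) + \<i> * of_real (Dps \<i>)) / (2 * of_real (ps s)))"
    using Dps(1) ps
    by (simp add: score_s_def cwirt_of_real_ln cwirt_eq[OF has_derivative_of_real[OF Dps(1)]])
  show "score_theta ps pz (param 0 g) (mixA 0 g (s, z)) $ Inl i = cnj (score_s ps s) * z $ i"
    unfolding score_s using ps(2) linear_0[OF Dpz(2)]
    by (simp add: score DL_def linear_complex_decomp[OF Dps(2), of "- z $ i"]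
        linear_complex_decomp[OF Dps(2), of "\<i> * z $ i"] complex_eq_iff field_simps)
  have score_z: "score_z pz z $ i = - ((of_real (Dpz (axis i 1)) + \<i> * of_real (Dpz (axis i \<i>))) / (2 * of_real (pz z)))"
    using Dpz(1) pz
    by (simp add: score_z_def vwirt_of_real_ln vwirt_nth_eq[OF has_derivative_of_real[OF Dpz(1)]])
  have "s *s axis i \<i> = (s * \<i>) *s (axis i 1 :: complex^'n)"
    by (simp add: vec_eq_iff axis_def)
  then show "score_theta ps pz (param 0 g) (mixA 0 g (s, z)) $ Inr i = - cnj s * score_z pz z $ i"
    unfolding score_z using pz(2) linear_0[OF Dps(2)]
    by (simp add: score DL_def linear_axis_decomp[OF Dpz(2), of s]
        linear_axis_decomp[OF Dpz(2), of "s * \<i>"] linear_axis_decomp[OF Dpz(2), of "\<i> * s"]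
        complex_eq_iff field_simps)
qed

lemma upper_left_block_fisherJ: "upper_left_block (fisherJ ps pz t) = fisherF ps pz t"
  and fisherJ_upper_right: "fisherJ ps pz t $ Inl a $ Inr b = fisherP ps pz t $ a $ b"
  by (simp_all add: upper_left_block_def fisherJ_def Let_def vec_eq_iff)

lemma crlb_h_eq_upper_left_block:
  "crlb_h N ps pz t = upper_left_block (upper_left_block (matrix_inv (real N *\<^sub>R fisherJ ps pz t)))"
  by (simp add: crlb_h_def upper_left_block_def Let_def vec_eq_iff)

section \<open>Expectations\<close>

lemma (in pair_sigma_finite) integrable_mult_tensor:
  fixes f :: "'a \<Rightarrow> 'c::{real_normed_field, banach, second_countable_topology}" and g :: "'b \<Rightarrow> 'c"
  assumes f: "integrable M1 f" and g: "integrable M2 g"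
  shows "integrable (M1 \<Otimes>\<^sub>M M2) (\<lambda>v. f (fst v) * g (snd v))"
proof -
  have [measurable]: "f \<in> borel_measurable M1" "g \<in> borel_measurable M2"
    using f g by auto
  have "(\<integral>\<^sup>+v. ennreal (norm (f (fst v) * g (snd v))) \<partial>(M1 \<Otimes>\<^sub>M M2))
      = (\<integral>\<^sup>+x. ennreal (norm (f x)) * (\<integral>\<^sup>+y. ennreal (norm (g y)) \<partial>M2) \<partial>M1)"
    by (subst M2.nn_integral_fst[symmetric])
       (auto simp: norm_mult ennreal_mult nn_integral_cmult)
  also have "\<dots> = (\<integral>\<^sup>+x. ennreal (norm (f x)) \<partial>M1) * (\<integral>\<^sup>+y. ennreal (norm (g y)) \<partial>M2)"
    by (simp add: nn_integral_multc)
  also have "\<dots> < \<infinity>"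
    using f g by (simp add: integrable_iff_bounded ennreal_mult_less_top)
  finally show ?thesis
    by (simp add: integrable_iff_bounded)
qed

lemma (in pair_sigma_finite) integral_mult_tensor:
  fixes f :: "'a \<Rightarrow> 'c::{real_normed_field, banach, second_countable_topology}" and g :: "'b \<Rightarrow> 'c"
  assumes "integrable M1 f" and "integrable M2 g"
  shows "integral\<^sup>L (M1 \<Otimes>\<^sub>M M2) (\<lambda>v. f (fst v) * g (snd v)) = integral\<^sup>L M1 f * integral\<^sup>L M2 g"
  using integral_fst'[OF integrable_mult_tensor[OF assms]] by simp

definition has_expectation :: "('a::euclidean_space \<Rightarrow> real) \<Rightarrow> ('a \<Rightarrow> complex) \<Rightarrow> complex \<Rightarrow> bool" where
  "has_expectation p f e \<longleftrightarrow>
     integrable lborel (\<lambda>x. complex_of_real (p x) * f x) \<and> integral\<^sup>L lborel (\<lambda>x. complex_of_real (p x) * f x) = e"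

lemma has_expectation_cnj:
  assumes "has_expectation p f e"
  shows "has_expectation p (\<lambda>x. cnj (f x)) (cnj e)"
proof -
  have "integrable lborel (\<lambda>x. cnj (complex_of_real (p x) * f x))"
    using assms unfolding has_expectation_def by (intro integrable_cnj) simp
  moreover have "integral\<^sup>L lborel (\<lambda>x. cnj (complex_of_real (p x) * f x)) = cnj e"
    using assms by (simp only: has_expectation_def Bochner_Integration.integral_cnj)
  ultimately show ?thesis
    by (simp add: has_expectation_def)
qed

lemma has_expectation_minus:
  "has_expectation p f e \<Longrightarrow> has_expectation p (\<lambda>x. - f x) (- e)"
  by (simp add: has_expectation_def)

lemma has_expectation_zero_if_AE_zero:
  assumes "has_expectation p f e" and "AE x in lborel. f x = 0"
  shows "e = 0"
proof -
  have "AE x in lborel. complex_of_real (p x) * f x = 0"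
    using assms(2) by eventually_elim simp
  then have "integral\<^sup>L lborel (\<lambda>x. complex_of_real (p x) * f x) = 0"
    by (rule integral_eq_zero_AE)
  with assms(1) show ?thesis
    by (simp add: has_expectation_def)
qed

lemma has_expectation_lincomb:
  assumes "finite I" and "\<And>i. i \<in> I \<Longrightarrow> has_expectation p (f i) (e i)"
  shows "has_expectation p (\<lambda>x. \<Sum>i\<in>I. c i * f i x) (\<Sum>i\<in>I. c i * e i)"
proof -
  have "(\<lambda>x. complex_of_real (p x) * (\<Sum>i\<in>I. c i * f i x)) = (\<lambda>x. \<Sum>i\<in>I. c i * (complex_of_real (p x) * f i x))"
    by (simp add: sum_distrib_left mult_ac)
  then show ?thesis
    using assms by (simp add: has_expectation_def integral_sum)
qed

lemma Ev_mult:
  fixes ps :: "complex \<Rightarrow> real" and pz :: "complex^'n \<Rightarrow> real"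
  assumes "has_expectation ps a c" and "has_expectation pz b d"
  shows "Ev ps pz (\<lambda>v. a (fst v) * b (snd v)) = c * d"
proof -
  have "Ev ps pz (\<lambda>v. a (fst v) * b (snd v)) = integral\<^sup>L (lborel \<Otimes>\<^sub>M lborel)
      (\<lambda>v. (complex_of_real (ps (fst v)) * a (fst v)) * (complex_of_real (pz (snd v)) * b (snd v)))"
    unfolding Ev_def by (simp add: mult_ac)
  also have "\<dots> = c * d"
    using assms lborel_pair.integral_mult_tensor[of "\<lambda>s. complex_of_real (ps s) * a s"
        "\<lambda>z. complex_of_real (pz z) * b z"]
    by (simp add: has_expectation_def)
  finally show ?thesis .
qed

lemma borel_measurable_lborel_continuous: "continuous_on UNIV f \<Longrightarrow> f \<in> borel_measurable lborel"
  using borel_measurable_continuous_onI by (simp add: measurable_lborel1)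

lemma borel_measurable_vec_nth [measurable]:
  "(\<lambda>z::'a::real_normed_vector^'n. z $ i) \<in> borel_measurable borel"
  by (intro borel_measurable_continuous_onI continuous_intros)

lemma borel_measurable_cnj [measurable]:
  "f \<in> borel_measurable M \<Longrightarrow> (\<lambda>x. cnj (f x)) \<in> borel_measurable M"
  by (rule measurable_compose[of f M borel cnj])
     (auto intro: borel_measurable_continuous_onI continuous_on_cnj continuous_on_id)

lemma integrable_weighted_if_bounded:
  fixes h :: "'a::euclidean_space \<Rightarrow> complex" and p r :: "'a \<Rightarrow> real"
  assumes "integrable lborel (\<lambda>x. p x * r x)" and [measurable]: "p \<in> borel_measurable lborel"
    and [measurable]: "h \<in> borel_measurable lborel" and "\<And>x. p x \<ge> 0" and "\<And>x. norm (h x) \<le> r x"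
  shows "integrable lborel (\<lambda>x. complex_of_real (p x) * h x)"
proof (rule Bochner_Integration.integrable_bound[OF assms(1)])
  show "(\<lambda>x. complex_of_real (p x) * h x) \<in> borel_measurable lborel"
    by measurable
  show "AE x in lborel. norm (complex_of_real (p x) * h x) \<le> norm (p x * r x)"
  proof (rule AE_I2)
    fix x
    have "norm (complex_of_real (p x) * h x) = p x * norm (h x)"
      using assms(4)[of x] by (simp add: norm_mult)
    also have "\<dots> \<le> p x * r x"
      using assms(4,5) by (simp add: mult_left_mono)
    also have "\<dots> \<le> norm (p x * r x)"
      by simp
    finally show "norm (complex_of_real (p x) * h x) \<le> norm (p x * r x)" .
  qed
qed

lemma AE_zero_if_weighted_integral_zero:
  fixes h :: "'a::euclidean_space \<Rightarrow> complex" and p :: "'a \<Rightarrow> real"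
  assumes "integrable lborel (\<lambda>x. p x * (norm (h x))\<^sup>2)" and "\<And>x. p x > 0"
    and "integral\<^sup>L lborel (\<lambda>x. p x * (norm (h x))\<^sup>2) = 0"
  shows "AE x in lborel. h x = 0"
proof -
  have "AE x in lborel. p x * (norm (h x))\<^sup>2 = 0"
    using integral_nonneg_eq_0_iff_AE[OF assms(1)] assms(2,3) by (simp add: less_imp_le)
  then show ?thesis
  proof eventually_elim
    case (elim x)
    with assms(2)[of x] show "h x = 0"
      by simp
  qed
qed

lemma gram_matrix_form:
  fixes p :: "'a::euclidean_space \<Rightarrow> real" and w :: "'n::finite \<Rightarrow> 'a \<Rightarrow> complex" and M :: "complex^'n^'n"
  assumes int: "\<And>i j. integrable lborel (\<lambda>z. complex_of_real (p z) * (w i z * cnj (w j z)))"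
    and M: "\<And>i j. M $ i $ j = integral\<^sup>L lborel (\<lambda>z. complex_of_real (p z) * (w i z * cnj (w j z)))"
  shows "cinner x (M *v x) = of_real (integral\<^sup>L lborel (\<lambda>z. p z * (norm (\<Sum>i\<in>UNIV. cnj (x $ i) * w i z))\<^sup>2))"
    and "integrable lborel (\<lambda>z. p z * (norm (\<Sum>i\<in>UNIV. cnj (x $ i) * w i z))\<^sup>2)"
proof -
  define F where "F i j z = complex_of_real (p z) * (w i z * cnj (w j z)) * (cnj (x $ i) * x $ j)" for i j z
  have integrable_F: "integrable lborel (F i j)" for i j
    unfolding F_def using int by simp
  have sum_F: "(\<Sum>i\<in>UNIV. \<Sum>j\<in>UNIV. F i j z) = of_real (p z * (norm (\<Sum>i\<in>UNIV. cnj (x $ i) * w i z))\<^sup>2)" for z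
  proof -
    have "(\<Sum>i\<in>UNIV. \<Sum>j\<in>UNIV. F i j z) =
        of_real (p z) * ((\<Sum>i\<in>UNIV. cnj (x $ i) * w i z) * cnj (\<Sum>j\<in>UNIV. cnj (x $ j) * w j z))"
      unfolding F_def by (simp add: sum_distrib_left sum_distrib_right mult_ac)
    then show ?thesis
      by (simp only: complex_norm_square of_real_mult)
  qed
  have "integral\<^sup>L lborel (F i j) = M $ i $ j * (cnj (x $ i) * x $ j)" for i j
    unfolding F_def M by (rule integral_mult_left_zero)
  then have "cinner x (M *v x) = (\<Sum>i\<in>UNIV. \<Sum>j\<in>UNIV. integral\<^sup>L lborel (F i j))"
    unfolding cinner_def matrix_vector_mult_def by (simp add: sum_distrib_left mult_ac)
  also have "\<dots> = integral\<^sup>L lborel (\<lambda>z. \<Sum>i\<in>UNIV. \<Sum>j\<in>UNIV. F i j z)"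
    using integrable_F by (simp add: integral_sum)
  also have "\<dots> = integral\<^sup>L lborel (\<lambda>z. of_real (p z * (norm (\<Sum>i\<in>UNIV. cnj (x $ i) * w i z))\<^sup>2))"
    unfolding sum_F ..
  also have "\<dots> = of_real (integral\<^sup>L lborel (\<lambda>z. p z * (norm (\<Sum>i\<in>UNIV. cnj (x $ i) * w i z))\<^sup>2))"
    by (rule integral_complex_of_real)
  finally show "cinner x (M *v x) = of_real (integral\<^sup>L lborel (\<lambda>z. p z * (norm (\<Sum>i\<in>UNIV. cnj (x $ i) * w i z))\<^sup>2))" .
  have "integrable lborel (\<lambda>z. of_real (p z * (norm (\<Sum>i\<in>UNIV. cnj (x $ i) * w i z))\<^sup>2) :: complex)"
    unfolding sum_F[symmetric] using integrable_F by simp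
  from integrable_Re[OF this]
  show "integrable lborel (\<lambda>z. p z * (norm (\<Sum>i\<in>UNIV. cnj (x $ i) * w i z))\<^sup>2)"
    by simp
qed

lemma gram_matrix_form_zero_AE:
  fixes p :: "'a::euclidean_space \<Rightarrow> real" and w :: "'n::finite \<Rightarrow> 'a \<Rightarrow> complex" and M :: "complex^'n^'n"
  assumes "\<And>i j. integrable lborel (\<lambda>z. complex_of_real (p z) * (w i z * cnj (w j z)))"
    and "\<And>i j. M $ i $ j = integral\<^sup>L lborel (\<lambda>z. complex_of_real (p z) * (w i z * cnj (w j z)))"
    and "\<And>z. p z > 0" and "cinner x (M *v x) = 0"
  shows "AE z in lborel. (\<Sum>i\<in>UNIV. cnj (x $ i) * w i z) = 0"
  using gram_matrix_form[OF assms(1,2)] assms(3,4)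
  by (intro AE_zero_if_weighted_integral_zero) auto

section \<open>Fisher information of regular circular sources\<close>

locale regular_circular_densities =
  fixes ps :: "complex \<Rightarrow> real" and pz :: "complex^'n \<Rightarrow> real"
  assumes ps_pos: "\<forall>s. ps s > 0" and pz_pos: "\<forall>z. pz z > 0"
    and ps_int: "integrable lborel ps" and ps_one: "integral\<^sup>L lborel ps = 1"
    and pz_int: "integrable lborel pz" and pz_one: "integral\<^sup>L lborel pz = 1"
    and ps_diff: "\<forall>s. ps differentiable (at s)"
    and ps_C1: "continuous_on UNIV (cwirt (\<lambda>t. complex_of_real (ps t)))"
    and pz_diff: "\<forall>z. pz differentiable (at z)"
    and pz_C1: "continuous_on UNIV (vwirt (\<lambda>t. complex_of_real (pz t)))"
    and s_ibp: "\<forall>f \<in> {\<lambda>t. 1, \<lambda>t. t, \<lambda>t. cnj t}.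
        integrable lborel (cwirt (\<lambda>t. f t * complex_of_real (ps t)))
      \<and> integral\<^sup>L lborel (cwirt (\<lambda>t. f t * complex_of_real (ps t))) = 0"
    and z_ibp: "\<forall>i j. \<forall>f \<in> {\<lambda>t. 1, \<lambda>t. t $ j, \<lambda>t. cnj (t $ j)}.
        integrable lborel (\<lambda>z. vwirt (\<lambda>t. f t * complex_of_real (pz t)) z $ i)
      \<and> integral\<^sup>L lborel (\<lambda>z. vwirt (\<lambda>t. f t * complex_of_real (pz t)) z $ i) = 0"
    and s_mom2: "integrable lborel (\<lambda>s. ps s * (cmod s)\<^sup>2)"
    and s_fish: "integrable lborel (\<lambda>s. ps s * (cmod (score_s ps s))\<^sup>2)"
    and z_mom2: "integrable lborel (\<lambda>z. pz z * (norm z)\<^sup>2)"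
    and z_fish: "integrable lborel (\<lambda>z. pz z * (norm (score_z pz z))\<^sup>2)"
    and s_circ: "integral\<^sup>L lborel (\<lambda>s. ps s *\<^sub>R s\<^sup>2) = 0"
    and z_circ: "\<forall>i j. integral\<^sup>L lborel (\<lambda>z. pz z *\<^sub>R (z $ i * z $ j)) = 0"
begin

lemma ps_measurable [measurable]: "ps \<in> borel_measurable lborel"
  and pz_measurable [measurable]: "pz \<in> borel_measurable lborel"
  using ps_int pz_int by auto

lemma has_derivative_ps:
  "((\<lambda>t. complex_of_real (ps t)) has_derivative (\<lambda>h. of_real (frechet_derivative ps (at s) h))) (at s)"
  using ps_diff by (intro has_derivative_of_real) (simp add: frechet_derivative_works[symmetric])

lemma has_derivative_pz:
  "((\<lambda>t. complex_of_real (pz t)) has_derivative (\<lambda>h. of_real (frechet_derivative pz (at z) h))) (at z)"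
  using pz_diff by (intro has_derivative_of_real) (simp add: frechet_derivative_works[symmetric])

lemma score_s_eq: "score_s ps s = - cwirt (\<lambda>t. complex_of_real (ps t)) s / of_real (ps s)"
  using ps_diff ps_pos by (simp add: score_s_def cwirt_of_real_ln)

lemma score_z_nth_eq: "score_z pz z $ i = - vwirt (\<lambda>t. complex_of_real (pz t)) z $ i / of_real (pz z)"
  using pz_diff pz_pos by (simp add: score_z_def vwirt_of_real_ln)

lemma score_s_measurable [measurable]: "score_s ps \<in> borel_measurable lborel"
proof -
  have [measurable]: "cwirt (\<lambda>t. complex_of_real (ps t)) \<in> borel_measurable lborel"
    using ps_C1 by (rule borel_measurable_lborel_continuous)
  show ?thesis
    unfolding score_s_eq[abs_def] by measurable
qed

lemma score_z_nth_measurable [measurable]: "(\<lambda>z. score_z pz z $ i) \<in> borel_measurable lborel"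
proof -
  have [measurable]: "(\<lambda>z. vwirt (\<lambda>t. complex_of_real (pz t)) z $ i) \<in> borel_measurable lborel"
    using continuous_on_component[OF pz_C1] by (rule borel_measurable_lborel_continuous)
  show ?thesis
    unfolding score_z_nth_eq by measurable
qed

text \<open>The next four identities are integrations by parts: p psi = - dp/dt* by the definition of the
  score, and the boundary terms vanish by the assumptions s_ibp and z_ibp.\<close>
lemma expectation_score_s_mult_cnj: "has_expectation ps (\<lambda>s. score_s ps s * cnj s) 1"
proof -
  have "complex_of_real (ps s) * (score_s ps s * cnj s) =
      complex_of_real (ps s) - cwirt (\<lambda>t. cnj t * complex_of_real (ps t)) s" for s
    using ps_pos[rule_format, of s] cwirt_mult[OF has_derivative_cnj[OF has_derivative_ident] has_derivative_ps]
    by (simp add: score_s_eq cwirt_cnj field_simps)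
  then show ?thesis
    using ps_int ps_one s_ibp by (simp add: has_expectation_def)
qed

lemma expectation_score_s_mult: "has_expectation ps (\<lambda>s. score_s ps s * s) 0"
proof -
  have "complex_of_real (ps s) * (score_s ps s * s) = - cwirt (\<lambda>t. t * complex_of_real (ps t)) s" for s
    using ps_pos[rule_format, of s] cwirt_mult[OF has_derivative_ident has_derivative_ps]
    by (simp add: score_s_eq cwirt_id field_simps)
  then show ?thesis
    using s_ibp by (simp add: has_expectation_def)
qed

lemma expectation_score_z_mult_cnj:
  "has_expectation pz (\<lambda>z. score_z pz z $ i * cnj (z $ j)) (if i = j then 1 else 0)"
proof -
  have "complex_of_real (pz z) * (score_z pz z $ i * cnj (z $ j)) =
      (if i = j then complex_of_real (pz z) else 0) - vwirt (\<lambda>t. cnj (t $ j) * complex_of_real (pz t)) z $ i" for z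
    using pz_pos[rule_format, of z] vwirt_nth_mult[OF has_derivative_cnj[OF has_derivative_vec_nth[OF has_derivative_ident]]
        has_derivative_pz, where k = i]
    by (simp add: score_z_nth_eq vwirt_nth_cnj_vec_nth field_simps)
  moreover have "integrable lborel (\<lambda>z. if i = j then complex_of_real (pz z) else 0)"
    using pz_int by (cases "i = j") auto
  ultimately show ?thesis
    using pz_one z_ibp by (simp add: has_expectation_def)
qed

lemma expectation_score_z_mult: "has_expectation pz (\<lambda>z. score_z pz z $ i * z $ j) 0"
proof -
  have "complex_of_real (pz z) * (score_z pz z $ i * z $ j) = - vwirt (\<lambda>t. t $ j * complex_of_real (pz t)) z $ i" for z
    using pz_pos[rule_format, of z] vwirt_nth_mult[OF has_derivative_vec_nth[OF has_derivative_ident] has_derivative_pz, where k = i]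
    by (simp add: score_z_nth_eq vwirt_nth_vec_nth field_simps)
  then show ?thesis
    using z_ibp by (simp add: has_expectation_def)
qed

lemma expectation_norm_score_s: "has_expectation ps (\<lambda>s. cnj (score_s ps s) * score_s ps s) (kappa_s ps)"
proof -
  have weighted: "(\<lambda>s. complex_of_real (ps s) * (cnj (score_s ps s) * score_s ps s)) =
      (\<lambda>s. complex_of_real (ps s * (cmod (score_s ps s))\<^sup>2))"
    by (simp only: cnj_mult_self of_real_mult)
  show ?thesis
    unfolding has_expectation_def kappa_s_def weighted
    by (intro conjI integrable_of_real s_fish integral_complex_of_real)
qed

lemma expectation_norm_s: "has_expectation ps (\<lambda>s. cnj s * s) (sigma2_s ps)"
proof -
  have weighted: "(\<lambda>s. complex_of_real (ps s) * (cnj s * s)) = (\<lambda>s. complex_of_real (ps s * (cmod s)\<^sup>2))"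
    by (simp only: cnj_mult_self of_real_mult)
  show ?thesis
    unfolding has_expectation_def sigma2_s_def weighted
    by (intro conjI integrable_of_real s_mom2 integral_complex_of_real)
qed

lemma expectation_cnj_s_sq: "has_expectation ps (\<lambda>s. cnj s * cnj s) 0"
proof -
  have "integrable lborel (\<lambda>s. complex_of_real (ps s) * (cnj s * cnj s))"
    using ps_pos by (intro integrable_weighted_if_bounded[OF s_mom2]) (auto simp: norm_mult power2_eq_square less_imp_le)
  moreover have "(\<lambda>s. complex_of_real (ps s) * (cnj s * cnj s)) = (\<lambda>s. cnj (ps s *\<^sub>R s\<^sup>2))"
    by (simp add: scaleR_conv_of_real power2_eq_square)
  then have "integral\<^sup>L lborel (\<lambda>s. complex_of_real (ps s) * (cnj s * cnj s)) = 0"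
    by (simp only: Bochner_Integration.integral_cnj s_circ complex_cnj_zero)
  ultimately show ?thesis
    by (simp add: has_expectation_def)
qed

lemma expectation_cnj_score_s_sq: "\<exists>e. has_expectation ps (\<lambda>s. cnj (score_s ps s) * cnj (score_s ps s)) e"
  using ps_pos
  by (auto simp: has_expectation_def norm_mult power2_eq_square less_imp_le
      intro!: integrable_weighted_if_bounded[OF s_fish])

lemma integrable_z_moment:
  assumes "\<And>z. norm (h z) \<le> (norm z)\<^sup>2" and "h \<in> borel_measurable lborel"
  shows "integrable lborel (\<lambda>z. complex_of_real (pz z) * h z)"
  using assms pz_pos by (intro integrable_weighted_if_bounded[OF z_mom2]) (auto simp: less_imp_le)

lemma integrable_score_z_moment:
  assumes "\<And>z. norm (h z) \<le> (norm (score_z pz z))\<^sup>2" and "h \<in> borel_measurable lborel"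
  shows "integrable lborel (\<lambda>z. complex_of_real (pz z) * h z)"
  using assms pz_pos by (intro integrable_weighted_if_bounded[OF z_fish]) (auto simp: less_imp_le)

lemma expectation_cov_z: "has_expectation pz (\<lambda>z. z $ i * cnj (z $ j)) (cov_z pz $ i $ j)"
  unfolding has_expectation_def cov_z_def
  by (auto intro!: integrable_z_moment simp: norm_mult norm_vec_nth_mult_le)

lemma expectation_kappa_z: "has_expectation pz (\<lambda>z. score_z pz z $ i * cnj (score_z pz z $ j)) (kappa_z pz $ i $ j)"
  unfolding has_expectation_def kappa_z_def
  by (auto intro!: integrable_score_z_moment simp: norm_mult norm_vec_nth_mult_le)

lemma expectation_z_mult: "has_expectation pz (\<lambda>z. z $ i * z $ j) 0"
  using z_circ
  by (auto intro!: integrable_z_moment simp: has_expectation_def norm_mult norm_vec_nth_mult_le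
      scaleR_conv_of_real)

lemma expectation_score_z_mult_score_z: "\<exists>e. has_expectation pz (\<lambda>z. score_z pz z $ i * score_z pz z $ j) e"
  by (auto intro!: integrable_score_z_moment simp: has_expectation_def norm_mult norm_vec_nth_mult_le)

lemma score_theta_Inl: "score_theta ps pz (param 0 g) (mixA 0 g v) $ Inl i = cnj (score_s ps (fst v)) * snd v $ i"
  and score_theta_Inr: "score_theta ps pz (param 0 g) (mixA 0 g v) $ Inr i = - cnj (fst v) * score_z pz (snd v) $ i"
  using ps_diff pz_diff ps_pos pz_pos by (cases v; simp add: score_theta_at_param_zero)+

lemma fisherF_at_param_zero:
  "fisherF ps pz (param 0 g) =
     block_matrix (kappa_s ps *\<^sub>R cov_z pz) (- mat 1) (- mat 1) (sigma2_s ps *\<^sub>R kappa_z pz)"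
proof -
  let ?\<psi> = "score_s ps" and ?\<Psi> = "\<lambda>z. score_z pz z"
  have F: "fisherF ps pz (param 0 g) $ a $ b = Ev ps pz (\<lambda>v.
      score_theta ps pz (param 0 g) (mixA 0 g v) $ a * cnj (score_theta ps pz (param 0 g) (mixA 0 g v) $ b))" for a b
    by (simp add: fisherF_def Let_def)
  have "fisherF ps pz (param 0 g) $ Inl i $ Inl j
      = Ev ps pz (\<lambda>v. (cnj (?\<psi> (fst v)) * ?\<psi> (fst v)) * (snd v $ i * cnj (snd v $ j)))" for i j
    by (simp add: F score_theta_Inl mult_ac)
  also have "\<dots> i j = of_real (kappa_s ps) * cov_z pz $ i $ j" for i j
    by (rule Ev_mult[OF expectation_norm_score_s expectation_cov_z])
  finally have Inl_Inl: "fisherF ps pz (param 0 g) $ Inl i $ Inl j = of_real (kappa_s ps) * cov_z pz $ i $ j" for i j .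
  have "fisherF ps pz (param 0 g) $ Inl i $ Inr j
      = Ev ps pz (\<lambda>v. (- cnj (?\<psi> (fst v) * cnj (fst v))) * cnj (?\<Psi> (snd v) $ j * cnj (snd v $ i)))" for i j
    by (simp add: F score_theta_Inl score_theta_Inr mult_ac)
  also have "\<dots> i j = - cnj 1 * cnj (if j = i then 1 else 0)" for i j
    by (intro Ev_mult has_expectation_minus has_expectation_cnj expectation_score_s_mult_cnj
        expectation_score_z_mult_cnj)
  finally have Inl_Inr: "fisherF ps pz (param 0 g) $ Inl i $ Inr j = (if i = j then - 1 else 0)" for i j
    by simp
  have "fisherF ps pz (param 0 g) $ Inr i $ Inl j
      = Ev ps pz (\<lambda>v. (- (?\<psi> (fst v) * cnj (fst v))) * (?\<Psi> (snd v) $ i * cnj (snd v $ j)))" for i j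
    by (simp add: F score_theta_Inl score_theta_Inr mult_ac)
  also have "\<dots> i j = - 1 * (if i = j then 1 else 0)" for i j
    by (intro Ev_mult has_expectation_minus expectation_score_s_mult_cnj expectation_score_z_mult_cnj)
  finally have Inr_Inl: "fisherF ps pz (param 0 g) $ Inr i $ Inl j = (if i = j then - 1 else 0)" for i j
    by simp
  have "fisherF ps pz (param 0 g) $ Inr i $ Inr j
      = Ev ps pz (\<lambda>v. (cnj (fst v) * fst v) * (?\<Psi> (snd v) $ i * cnj (?\<Psi> (snd v) $ j)))" for i j
    by (simp add: F score_theta_Inr mult_ac)
  also have "\<dots> i j = of_real (sigma2_s ps) * kappa_z pz $ i $ j" for i j
    by (rule Ev_mult[OF expectation_norm_s expectation_kappa_z])
  finally have Inr_Inr: "fisherF ps pz (param 0 g) $ Inr i $ Inr j = of_real (sigma2_s ps) * kappa_z pz $ i $ j" for i j .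
  show ?thesis
    by (simp add: vec_eq_iff block_matrix_def mat_def Inl_Inl Inl_Inr Inr_Inl Inr_Inr
        scaleR_conv_of_real[where 'a = complex] split: sum.split)
qed

lemma fisherP_at_param_zero: "fisherP ps pz (param 0 g) = 0"
proof -
  let ?\<psi> = "score_s ps" and ?\<Psi> = "\<lambda>z. score_z pz z"
  have P: "fisherP ps pz (param 0 g) $ a $ b = Ev ps pz (\<lambda>v.
      score_theta ps pz (param 0 g) (mixA 0 g v) $ a * score_theta ps pz (param 0 g) (mixA 0 g v) $ b)" for a b
    by (simp add: fisherP_def Let_def)
  obtain e1 where e1: "has_expectation ps (\<lambda>s. cnj (?\<psi> s) * cnj (?\<psi> s)) e1"
    using expectation_cnj_score_s_sq by blast
  obtain e2 where e2: "\<And>i j. has_expectation pz (\<lambda>z. ?\<Psi> z $ i * ?\<Psi> z $ j) (e2 i j)"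
    using expectation_score_z_mult_score_z by metis
  have "fisherP ps pz (param 0 g) $ Inl i $ Inl j
      = Ev ps pz (\<lambda>v. (cnj (?\<psi> (fst v)) * cnj (?\<psi> (fst v))) * (snd v $ i * snd v $ j))" for i j
    by (simp add: P score_theta_Inl mult_ac)
  also have "\<dots> i j = e1 * 0" for i j
    by (rule Ev_mult[OF e1 expectation_z_mult])
  finally have Inl_Inl: "fisherP ps pz (param 0 g) $ Inl i $ Inl j = 0" for i j
    by simp
  have "fisherP ps pz (param 0 g) $ Inl i $ Inr j
      = Ev ps pz (\<lambda>v. (- cnj (?\<psi> (fst v) * fst v)) * (?\<Psi> (snd v) $ j * snd v $ i))" for i j
    by (simp add: P score_theta_Inl score_theta_Inr mult_ac)
  moreover have "fisherP ps pz (param 0 g) $ Inr i $ Inl j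
      = Ev ps pz (\<lambda>v. (- cnj (?\<psi> (fst v) * fst v)) * (?\<Psi> (snd v) $ i * snd v $ j))" for i j
    by (simp add: P score_theta_Inl score_theta_Inr mult_ac)
  moreover have "Ev ps pz (\<lambda>v. (- cnj (?\<psi> (fst v) * fst v)) * (?\<Psi> (snd v) $ i * snd v $ j)) = - cnj 0 * 0" for i j
    by (intro Ev_mult has_expectation_minus has_expectation_cnj expectation_score_s_mult
        expectation_score_z_mult)
  ultimately have Inl_Inr: "fisherP ps pz (param 0 g) $ Inl i $ Inr j = 0"
    and Inr_Inl: "fisherP ps pz (param 0 g) $ Inr i $ Inl j = 0" for i j
    by simp_all
  have "fisherP ps pz (param 0 g) $ Inr i $ Inr j
      = Ev ps pz (\<lambda>v. (cnj (fst v) * cnj (fst v)) * (?\<Psi> (snd v) $ i * ?\<Psi> (snd v) $ j))" for i j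
    by (simp add: P score_theta_Inr mult_ac)
  also have "\<dots> i j = 0 * e2 i j" for i j
    by (rule Ev_mult[OF expectation_cnj_s_sq e2])
  finally have Inr_Inr: "fisherP ps pz (param 0 g) $ Inr i $ Inr j = 0" for i j
    by simp
  have "fisherP ps pz (param 0 g) $ a $ b = 0" for a b
    by (cases a; cases b) (simp_all add: Inl_Inl Inl_Inr Inr_Inl Inr_Inr)
  then show ?thesis
    by (simp add: vec_eq_iff)
qed

lemma sigma2_s_nonzero: "sigma2_s ps \<noteq> 0"
proof
  assume "sigma2_s ps = 0"
  then have "AE s in lborel. s = (0::complex)"
    using AE_zero_if_weighted_integral_zero[of ps "\<lambda>s. s"] s_mom2 ps_pos by (simp add: sigma2_s_def)
  then have "AE s in lborel. score_s ps s * cnj s = 0"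
    by eventually_elim simp
  with expectation_score_s_mult_cnj show False
    using has_expectation_zero_if_AE_zero by fastforce
qed

lemma kappa_s_nonzero: "kappa_s ps \<noteq> 0"
proof
  assume "kappa_s ps = 0"
  then have "AE s in lborel. score_s ps s = 0"
    using AE_zero_if_weighted_integral_zero[of ps "score_s ps"] s_fish ps_pos by (simp add: kappa_s_def)
  then have "AE s in lborel. score_s ps s * cnj s = 0"
    by eventually_elim simp
  with expectation_score_s_mult_cnj show False
    using has_expectation_zero_if_AE_zero by fastforce
qed

text \<open>kappa_z is the Gram matrix of the score components; a vector in its kernel gives a combination
  of the scores vanishing almost everywhere, which the identity E[psi z^H] = I rules out.\<close>
lemma kappa_z_invertible: "invertible (kappa_z pz)"
  unfolding invertible_left_inverse matrix_left_invertible_ker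
proof (intro allI impI)
  fix x
  assume "kappa_z pz *v x = 0"
  define h where "h z = (\<Sum>i\<in>UNIV. cnj (x $ i) * score_z pz z $ i)" for z
  have "AE z in lborel. h z = 0"
    unfolding h_def using \<open>kappa_z pz *v x = 0\<close> expectation_kappa_z pz_pos
    by (intro gram_matrix_form_zero_AE[of pz "\<lambda>i z. score_z pz z $ i" "kappa_z pz"])
       (auto simp: has_expectation_def kappa_z_def)
  then have "AE z in lborel. h z * cnj (z $ j) = 0" for j
    by eventually_elim simp
  moreover have "has_expectation pz (\<lambda>z. h z * cnj (z $ j)) (cnj (x $ j))" for j
  proof -
    have "has_expectation pz (\<lambda>z. \<Sum>i\<in>UNIV. cnj (x $ i) * (score_z pz z $ i * cnj (z $ j)))
        (\<Sum>i\<in>UNIV. cnj (x $ i) * (if i = j then 1 else 0))"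
      by (intro has_expectation_lincomb expectation_score_z_mult_cnj) simp
    moreover have "(\<lambda>z. h z * cnj (z $ j)) = (\<lambda>z. \<Sum>i\<in>UNIV. cnj (x $ i) * (score_z pz z $ i * cnj (z $ j)))"
      by (simp add: h_def fun_eq_iff sum_distrib_left sum_distrib_right mult_ac)
    ultimately show ?thesis
      by (simp add: if_distrib if_distribR cong: if_cong)
  qed
  ultimately have "cnj (x $ j) = 0" for j
    using has_expectation_zero_if_AE_zero by blast
  then show "x = 0"
    by (simp add: vec_eq_iff)
qed

lemma cov_z_hermitian: "hermitian (cov_z pz)"
proof (rule hermitianI)
  fix i j
  have "has_expectation pz (\<lambda>z. z $ i * cnj (z $ j)) (cnj (cov_z pz $ j $ i))"
    using has_expectation_cnj[OF expectation_cov_z[of j i]] by (simp add: mult.commute)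
  with expectation_cov_z[of i j] show "cnj (cov_z pz $ j $ i) = cov_z pz $ i $ j"
    by (simp add: has_expectation_def)
qed

lemma cov_z_posdef:
  assumes "invertible (cov_z pz)"
  shows "posdef (cov_z pz)"
  unfolding posdef_def sum_cinner_form
proof (intro conjI allI impI)
  show "hermitian (cov_z pz)"
    by (rule cov_z_hermitian)
  fix x :: "complex^'n"
  assume "x \<noteq> 0"
  have int: "\<And>i j. integrable lborel (\<lambda>z. complex_of_real (pz z) * (z $ i * cnj (z $ j)))"
    and entries: "\<And>i j. cov_z pz $ i $ j = integral\<^sup>L lborel (\<lambda>z. complex_of_real (pz z) * (z $ i * cnj (z $ j)))"
    using expectation_cov_z by (simp_all add: has_expectation_def cov_z_def)
  define h where "h z = (\<Sum>i\<in>UNIV. cnj (x $ i) * z $ i)" for z :: "complex^'n"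
  have "cinner x (cov_z pz *v x) \<noteq> 0"
  proof
    assume "cinner x (cov_z pz *v x) = 0"
    then have "AE z in lborel. h z = 0"
      unfolding h_def using pz_pos by (intro gram_matrix_form_zero_AE[OF int entries]) auto
    then have "AE z in lborel. z $ i * cnj (h z) = 0" for i
      by eventually_elim simp
    moreover have "has_expectation pz (\<lambda>z. z $ i * cnj (h z)) ((cov_z pz *v x) $ i)" for i
    proof -
      have "has_expectation pz (\<lambda>z. \<Sum>j\<in>UNIV. x $ j * (z $ i * cnj (z $ j)))
          (\<Sum>j\<in>UNIV. x $ j * cov_z pz $ i $ j)"
        by (intro has_expectation_lincomb expectation_cov_z) simp
      moreover have "(\<lambda>z. z $ i * cnj (h z)) = (\<lambda>z. \<Sum>j\<in>UNIV. x $ j * (z $ i * cnj (z $ j)))"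
        by (simp add: h_def fun_eq_iff sum_distrib_left mult_ac)
      ultimately show ?thesis
        by (simp add: matrix_vector_mult_def mult.commute)
    qed
    ultimately have "(cov_z pz *v x) $ i = 0" for i
      using has_expectation_zero_if_AE_zero by blast
    then have "cov_z pz *v x = 0"
      by (simp add: vec_eq_iff)
    with assms \<open>x \<noteq> 0\<close> show False
      by (simp add: invertible_left_inverse matrix_left_invertible_ker)
  qed
  moreover have "cinner x (cov_z pz *v x) = of_real (Re (cinner x (cov_z pz *v x)))"
    and "Re (cinner x (cov_z pz *v x)) \<ge> 0"
    using gram_matrix_form(1)[OF int entries, of x] pz_pos by (simp_all add: less_imp_le)
  ultimately show "Re (cinner x (cov_z pz *v x)) > 0"
    by (metis less_eq_real_def of_real_0)
qed

end

theorem mainTheorem1: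
  fixes ps :: "complex \<Rightarrow> real" and pz :: "complex^'n \<Rightarrow> real"
    and g :: "complex^'n" and N :: nat
  assumes N_pos: "N > 0"
    \<comment> \<open>densities: positive, normalized\<close>
    and ps_pos: "\<forall>s. ps s > 0" and pz_pos: "\<forall>z. pz z > 0"
    and ps_int: "integrable lborel ps" and ps_one: "integral\<^sup>L lborel ps = 1"
    and pz_int: "integrable lborel pz" and pz_one: "integral\<^sup>L lborel pz = 1"
    \<comment> \<open>smoothness (continuously differentiable)\<close>
    and ps_diff: "\<forall>s. ps differentiable (at s)"
    and ps_C1: "continuous_on UNIV (cwirt (\<lambda>t. complex_of_real (ps t)))"
    and pz_diff: "\<forall>z. pz differentiable (at z)"
    and pz_C1: "continuous_on UNIV (vwirt (\<lambda>t. complex_of_real (pz t)))"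
    \<comment> \<open>finite second moments and Fisher informations\<close>
    and s_mom2: "integrable lborel (\<lambda>s. ps s * (cmod s)\<^sup>2)"
    and s_fish: "integrable lborel (\<lambda>s. ps s * (cmod (score_s ps s))\<^sup>2)"
    and z_mom2: "integrable lborel (\<lambda>z. pz z * (norm z)\<^sup>2)"
    and z_fish: "integrable lborel (\<lambda>z. pz z * (norm (score_z pz z))\<^sup>2)"
    \<comment> \<open>zero mean\<close>
    and s_mean: "integrable lborel (\<lambda>s. ps s *\<^sub>R s)" "integral\<^sup>L lborel (\<lambda>s. ps s *\<^sub>R s) = 0"
    and z_mean: "integrable lborel (\<lambda>z. pz z *\<^sub>R z)" "integral\<^sup>L lborel (\<lambda>z. pz z *\<^sub>R z) = 0"
    \<comment> \<open>circularity: E[s^2] = 0, E[z z^T] = 0\<close>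
    and s_circ: "integral\<^sup>L lborel (\<lambda>s. ps s *\<^sub>R s\<^sup>2) = 0"
    and z_circ: "\<forall>i j. integral\<^sup>L lborel (\<lambda>z. pz z *\<^sub>R (z $ i * z $ j)) = 0"
    \<comment> \<open>vanishing boundary terms in integration by parts\<close>
    and s_ibp: "\<forall>f \<in> {\<lambda>t. 1, \<lambda>t. t, \<lambda>t. cnj t}.
        integrable lborel (cwirt (\<lambda>t. f t * complex_of_real (ps t)))
      \<and> integral\<^sup>L lborel (cwirt (\<lambda>t. f t * complex_of_real (ps t))) = 0"
    and z_ibp: "\<forall>i j. \<forall>f \<in> {\<lambda>t. 1, \<lambda>t. t $ j, \<lambda>t. cnj (t $ j)}.
        integrable lborel (\<lambda>z. vwirt (\<lambda>t. f t * complex_of_real (pz t)) z $ i)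
      \<and> integral\<^sup>L lborel (\<lambda>z. vwirt (\<lambda>t. f t * complex_of_real (pz t)) z $ i) = 0"
    \<comment> \<open>C_z nonsingular; Fisher information at the true parameter (h = 0, g) nonsingular\<close>
    and Cz_inv: "invertible (cov_z pz)"
    and J_inv: "invertible (fisherJ ps pz (param 0 g))"
  shows "crlb_h N ps pz (param 0 g)
           = (1 / real N) *\<^sub>R matrix_inv (kappa_s ps *\<^sub>R cov_z pz
                 - (1 / sigma2_s ps) *\<^sub>R matrix_inv (kappa_z pz))
       \<and> (\<forall>om. eigenvalue_family (hpd_sqrt (cov_z pz) ** kappa_z pz ** hpd_sqrt (cov_z pz)) om
           \<longrightarrow> complex_of_real (1 / sigma2_s ps) * trace (cov_z pz ** crlb_h N ps pz (param 0 g))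
               = (1 / of_nat N) * (\<Sum>j\<in>UNIV. om j
                     / (of_real (sigma2_s ps * kappa_s ps) * om j - 1)))"
proof -
  interpret regular_circular_densities ps pz
    by unfold_locales (use assms in auto)
  let ?J = "fisherJ ps pz (param 0 g)"
  let ?S = "kappa_s ps *\<^sub>R cov_z pz - (1 / sigma2_s ps) *\<^sub>R matrix_inv (kappa_z pz)"
  have J_blocks: "upper_left_block ?J =
      block_matrix (kappa_s ps *\<^sub>R cov_z pz) (- mat 1) (- mat 1) (sigma2_s ps *\<^sub>R kappa_z pz)"
    and J_upper_right: "\<And>a b. ?J $ Inl a $ Inr b = 0"
    by (simp_all add: upper_left_block_fisherJ fisherJ_upper_right fisherF_at_param_zero
        fisherP_at_param_zero)
  have K_inv: "invertible (sigma2_s ps *\<^sub>R kappa_z pz)"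
    using kappa_z_invertible sigma2_s_nonzero by (simp add: scalar_invertible)
  have schur: "kappa_s ps *\<^sub>R cov_z pz - (- mat 1) ** matrix_inv (sigma2_s ps *\<^sub>R kappa_z pz) ** (- mat 1) = ?S"
    using kappa_z_invertible sigma2_s_nonzero by (simp add: matrix_inv_scaleR matrix_neg_left matrix_neg_right)
  note J_inv_blocks = upper_left_block_inverse[OF J_inv J_upper_right]
  note S_blocks = schur_complement_inverse[OF J_inv_blocks(1)[unfolded J_blocks] K_inv, unfolded schur]
  have crlb: "crlb_h N ps pz (param 0 g) = (1 / real N) *\<^sub>R matrix_inv ?S"
    using N_pos J_inv S_blocks(2)
    by (simp add: crlb_h_eq_upper_left_block matrix_inv_scaleR J_inv_blocks(2) J_blocks)
  have R: "hpd_sqrt (cov_z pz) ** hpd_sqrt (cov_z pz) = cov_z pz" "invertible (hpd_sqrt (cov_z pz))"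
    using hpd_sqrt[OF cov_z_posdef[OF Cz_inv]] posdef_invertible by auto
  show ?thesis
    unfolding eigenvalue_family_def
    using crlb trace_mult_inv_schur_complement[OF R kappa_z_invertible sigma2_s_nonzero kappa_s_nonzero S_blocks(1)]
      sigma2_s_nonzero
    by (simp add: matrix_scalar_ac trace_scaleR scaleR_conv_of_real[where 'a = complex]
        flip: scalar_matrix_assoc)
qed

end
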